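(* Setting and construction as in the context. Assume (i) $g$ is convex and Lipschitz continuous with Lipschitz constant $L_g\ge 0$, and (ii) for every $t\in[0,T]$ the set $\mathbb{W}(t)=B(t)\mathbb{U}\ominus(-E(t)\mathbb{D})$ is nonempty. Let $N\in\mathbb{N}$, levels $\gamma_1,\dots,\gamma_N\in g(\mathbb{R}^n)$, integers $n_k\in\mathbb{N}$, points $\bar x_{i,k}\in g^{-1}(\{\gamma_k\})$ ($1\le i\le n_k$), and controls $\omega_{i,k}\in\mathscr{W}[0,T]$ be given; let $\xi^\star_{i,k}$ be the solution on $[0,T]$ of $\dot\xi(s)=A(s)\xi(s)+\omega_{i,k}(s)$ a.e., $\xi(T)=\bar x_{i,k}$, let $\Omega^\star_k(t)=\mathrm{conv}(\{\xi^\star_{i,k}(t)\}_{i=1}^{n_k})$, and $$\bar v(t,x)=\min_{k\in\{1,\dots,N\}}\Big(L_g\inf_{\xi\in\Omega^\star_k(t)}\|\Phi_A(T,t)(x-\xi)\|+\gamma_k\Big).$$ Then $\bar v(t,x)\ge v(t,x)$ for all $(t,x)\in[0,T]\times\mathbb{R}^n$, where $v$ is the value function defined in the context.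
   Context: Fix $T>0$ and integers $n,m,\ell\ge 1$. Let $A\in C([0,T];\mathbb{R}^{n\times n})$, $B\in C([0,T];\mathbb{R}^{n\times m})$, $E\in C([0,T];\mathbb{R}^{n\times \ell})$, and let $\mathbb{U}\subset\mathbb{R}^m$, $\mathbb{D}\subset\mathbb{R}^\ell$ be compact, convex and nonempty; $g\in C(\mathbb{R}^n;\mathbb{R})$. For $0\le t\le T$, $\mathscr{U}[t,T]$ (resp. $\mathscr{D}[t,T]$) is the set of measurable maps $[t,T]\to\mathbb{U}$ (resp. $[t,T]\to\mathbb{D}$), and $\xi^{u,d}_{t,x}$ is the solution of $\dot\xi(s)=A(s)\xi(s)+B(s)u(s)+E(s)d(s)$ a.e. $s\in(t,T)$, $\xi(t)=x$. A map $\delta:\mathscr{U}[t,T]\to\mathscr{D}[t,T]$ is a non-anticipative strategy if for every $s\in[t,T]$ and $u_1,u_2\in\mathscr{U}[t,T]$, $u_1=u_2$ a.e. on $[t,s]$ implies $\delta[u_1]=\delta[u_2]$ a.e. on $[t,s]$; $\Delta[t,T]$ denotes the set of these. The value function is $v(t,x)=\sup_{\delta\in\Delta[t,T]}\inf_{u\in\mathscr{U}[t,T]}g(\xi^{u,\delta[u]}_{t,x}(T))$. $\Phi_A(s,\tau)$ is the state-transition matrix of $\dot y=A(s)y$. For $Y,Z\subseteq\mathbb{R}^n$: $Y\oplus Z=\{y+z\}$, $Y\ominus Z=\{c:\{c\}\oplus Z\subseteq Y\}$, $PY=\{Py:y\in Y\}$. $\mathscr{W}[t,T]$ is the set of measurable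 $\omega:[t,T]\to\mathbb{R}^n$ with $\omega(s)\in\mathbb{W}(s)$ for all $s$. *)

theory Defs
  imports "HOL-Analysis.Analysis"
begin

definition mink_diff :: "'a::ab_group_add set \<Rightarrow> 'a set \<Rightarrow> 'a set" where
  "mink_diff Y Z = {c. (\<lambda>z. c + z) ` Z \<subseteq> Y}"

text \<open>Measurable maps [t,T] into a set S (values outside [t,T] are irrelevant).\<close>
definition meas_maps :: "'b::euclidean_space set \<Rightarrow> real \<Rightarrow> real \<Rightarrow> (real \<Rightarrow> 'b) set" where
  "meas_maps S t T = {u. u measurable_on {t..T} \<and> (\<forall>s\<in>{t..T}. u s \<in> S)}"

text \<open>xi is a (Caratheodory) solution on [t,T] of
  xi' = A xi + B u + E d, xi(t) = x, in integral form.\<close>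
definition is_traj ::
  "(real \<Rightarrow> real^'n^'n) \<Rightarrow> (real \<Rightarrow> real^'m^'n) \<Rightarrow> (real \<Rightarrow> real^'l^'n) \<Rightarrow>
   real \<Rightarrow> real \<Rightarrow> real^'n \<Rightarrow> (real \<Rightarrow> real^'m) \<Rightarrow> (real \<Rightarrow> real^'l) \<Rightarrow> (real \<Rightarrow> real^'n) \<Rightarrow> bool" where
  "is_traj A B E T t x u d \<xi> \<longleftrightarrow> \<xi> t = x \<and>
     (\<forall>s\<in>{t..T}. ((\<lambda>r. A r *v \<xi> r + B r *v u r + E r *v d r) has_integral (\<xi> s - x)) {t..s})"

definition end_state ::
  "(real \<Rightarrow> real^'n^'n) \<Rightarrow> (real \<Rightarrow> real^'m^'n) \<Rightarrow> (real \<Rightarrow> real^'l^'n) \<Rightarrow>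
   real \<Rightarrow> real \<Rightarrow> real^'n \<Rightarrow> (real \<Rightarrow> real^'m) \<Rightarrow> (real \<Rightarrow> real^'l) \<Rightarrow> real^'n" where
  "end_state A B E T t x u d = (THE y. \<exists>\<xi>. is_traj A B E T t x u d \<xi> \<and> \<xi> T = y)"

definition strategies ::
  "(real^'m) set \<Rightarrow> (real^'l) set \<Rightarrow> real \<Rightarrow> real \<Rightarrow> ((real \<Rightarrow> real^'m) \<Rightarrow> (real \<Rightarrow> real^'l)) set" where
  "strategies U D t T = {\<delta>. (\<forall>u\<in>meas_maps U t T. \<delta> u \<in> meas_maps D t T) \<and>
     (\<forall>s\<in>{t..T}. \<forall>u1\<in>meas_maps U t T. \<forall>u2\<in>meas_maps U t T.
        (AE r in lebesgue. r \<in> {t..s} \<longrightarrow> u1 r = u2 r) \<longrightarrow>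
        (AE r in lebesgue. r \<in> {t..s} \<longrightarrow> \<delta> u1 r = \<delta> u2 r))}"

definition value_fun ::
  "(real \<Rightarrow> real^'n^'n) \<Rightarrow> (real \<Rightarrow> real^'m^'n) \<Rightarrow> (real \<Rightarrow> real^'l^'n) \<Rightarrow>
   (real^'m) set \<Rightarrow> (real^'l) set \<Rightarrow> (real^'n \<Rightarrow> real) \<Rightarrow> real \<Rightarrow> real \<Rightarrow> real^'n \<Rightarrow> real" where
  "value_fun A B E U D g T t x =
     (SUP \<delta>\<in>strategies U D t T. INF u\<in>meas_maps U t T. g (end_state A B E T t x u (\<delta> u)))"

definition state_trans ::
  "(real \<Rightarrow> real^'n^'n) \<Rightarrow> real \<Rightarrow> real \<Rightarrow> real \<Rightarrow> real^'n^'n" where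
  "state_trans A T s \<tau> = (THE M. \<exists>Y. Y \<tau> = mat 1 \<and>
      (\<forall>r\<in>{0..T}. (Y has_vector_derivative (A r ** Y r)) (at r within {0..T})) \<and> Y s = M)"

definition Wset ::
  "(real \<Rightarrow> real^'m^'n) \<Rightarrow> (real \<Rightarrow> real^'l^'n) \<Rightarrow> (real^'m) set \<Rightarrow> (real^'l) set \<Rightarrow> real \<Rightarrow> (real^'n) set" where
  "Wset B E U D t = mink_diff ((\<lambda>u. B t *v u) ` U) ((\<lambda>d. - (E t *v d)) ` D)"

end

theory Submission
  imports Defs
begin

text \<open>Fix a level k and a point \<xi>0 of the convex hull. Since every W(s) and g are convex, the
  corresponding convex combination \<xi>* of the backward trajectories is again driven by a
  control \<omega>* with values in W, and it satisfies \<xi>*(t) = \<xi>0 and g(\<xi>*(T)) \<le> \<gamma> k.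
  Whatever non-anticipative strategy the disturbance player uses, the control player can keep
  the state close to \<xi>*(s) + \<Phi>_A(s,t)(x - \<xi>0): because \<omega>*(s) - E(s) d \<in> B(s) U for every
  d \<in> D, the deviation w obeys w' = A w + B(s) (u - c(s)) with c(s) \<in> U, and Krasovskii's
  extremal aiming (on each cell of a fine grid use a control value minimising
  w(s_j) \<bullet> B(s_j) c) makes |w(T)| arbitrarily small by a discrete Gronwall argument.
  Lipschitz continuity of g then gives
  v(t,x) \<le> g(\<xi>*(T)) + L_g |\<Phi>_A(T,t)(x - \<xi>0)| \<le> \<gamma> k + L_g |\<Phi>_A(T,t)(x - \<xi>0)|.\<close>

section \<open>Linear Volterra equations and Gronwall's inequality\<close>

lemma norm_matrix_vector_mult_le:
  fixes A :: "real^'n^'m"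
  shows "norm (A *v x) \<le> norm A * norm x"
proof -
  have "norm (A *v x) = L2_set (\<lambda>i. \<bar>A $ i \<bullet> x\<bar>) UNIV"
    by (simp add: norm_vec_def matrix_mult_dot)
  also have "\<dots> \<le> L2_set (\<lambda>i. norm (A $ i) * norm x) UNIV"
    by (rule L2_set_mono) (auto simp: Cauchy_Schwarz_ineq2)
  also have "\<dots> = L2_set (\<lambda>i. norm (A $ i)) UNIV * norm x"
    by (rule L2_set_left_distrib[symmetric]) simp
  also have "\<dots> = norm A * norm x"
    by (simp only: norm_vec_def)
  finally show ?thesis .
qed

lemma bounded_bilinear_matrix_vector_mult:
  "bounded_bilinear ((*v) :: real^'n^'m \<Rightarrow> real^'n \<Rightarrow> real^'m)"
  by (rule bilinear_conv_bounded_bilinear[THEN iffD1])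
    (auto simp: bilinear_def linear_iff matrix_vector_mult_def vec_eq_iff sum.distrib
      sum_distrib_left algebra_simps)

lemma bounded_bilinear_matrix_matrix_mult:
  "bounded_bilinear ((**) :: real^'n^'m \<Rightarrow> real^'k^'n \<Rightarrow> real^'k^'m)"
  by (rule bilinear_conv_bounded_bilinear[THEN iffD1])
    (auto simp: bilinear_def linear_iff matrix_matrix_mult_def vec_eq_iff sum.distrib
      sum_distrib_left algebra_simps)

lemma continuous_on_compact_norm_bound:
  fixes f :: "'a::topological_space \<Rightarrow> 'b::real_normed_vector"
  assumes "continuous_on S f" "compact S"
  obtains K where "K > 0" "\<And>r. r \<in> S \<Longrightarrow> norm (f r) \<le> K"
  using compact_imp_bounded[OF compact_continuous_image[OF assms]]
  by (auto simp: bounded_pos)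

lemma norm_le_SUP_norm:
  fixes f :: "'a::topological_space \<Rightarrow> 'b::real_normed_vector"
  assumes "continuous_on S f" "compact S" "x \<in> S"
  shows "norm (f x) \<le> (SUP y\<in>S. norm (f y))"
proof (rule cSUP_upper[OF assms(3)])
  have "compact ((\<lambda>y. norm (f y)) ` S)"
    using assms by (intro compact_continuous_image continuous_on_norm)
  then show "bdd_above ((\<lambda>y. norm (f y)) ` S)"
    by (intro bounded_imp_bdd_above compact_imp_bounded)
qed

lemma bounded_bilinear_continuous_coefficient_bound:
  fixes prod :: "'a::real_normed_vector \<Rightarrow> 'b::real_normed_vector \<Rightarrow> 'c::real_normed_vector"
    and A :: "'d::topological_space \<Rightarrow> 'a"
  assumes "bounded_bilinear prod" "continuous_on S A" "compact S"
  obtains K where "K > 0" "\<And>r x. r \<in> S \<Longrightarrow> norm (prod (A r) x) \<le> K * norm x"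
proof -
  obtain KA where KA: "KA > 0" "\<And>r. r \<in> S \<Longrightarrow> norm (A r) \<le> KA"
    using continuous_on_compact_norm_bound[OF assms(2,3)] by blast
  obtain Kp where Kp: "Kp > 0" "\<And>a b. norm (prod a b) \<le> norm a * norm b * Kp"
    using bounded_bilinear.pos_bounded[OF assms(1)] by blast
  show thesis
  proof (rule that[of "KA * Kp"])
    show "KA * Kp > 0" using KA Kp by simp
    fix r and x :: 'b assume "r \<in> S"
    then have "norm (A r) * norm x * Kp \<le> KA * norm x * Kp"
      using KA Kp by (intro mult_right_mono) auto
    then show "norm (prod (A r) x) \<le> KA * Kp * norm x"
      using Kp(2)[of "A r" x] by (simp add: mult_ac)
  qed
qed

lemma gronwall_inequality:
  fixes \<phi> :: "real \<Rightarrow> real"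
  assumes cont: "continuous_on {a..b} \<phi>" and K: "K \<ge> 0"
    and le: "\<And>s. s \<in> {a..b} \<Longrightarrow> \<phi> s \<le> \<alpha> + K * integral {a..s} \<phi>"
    and s: "s \<in> {a..b}"
  shows "\<phi> s \<le> \<alpha> * exp (K * (s - a))"
proof -
  define \<psi> where "\<psi> s = \<alpha> + K * integral {a..s} \<phi>" for s
  define \<rho> where "\<rho> s = exp (- K * (s - a)) * \<psi> s" for s
  have sub: "{a..s} \<subseteq> {a..b}" using s by auto
  have "((\<lambda>r. exp (- K * (r - a)) * (K * (\<phi> r - \<psi> r))) has_integral \<rho> s - \<rho> a) {a..s}"
  proof (rule fundamental_theorem_of_calculus)
    fix r assume r: "r \<in> {a..s}"
    have "(\<psi> has_real_derivative K * \<phi> r) (at r within {a..s})"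
      unfolding \<psi>_def using r
      by (auto intro!: derivative_eq_intros integral_has_real_derivative
          continuous_on_subset[OF cont sub])
    then show "(\<rho> has_vector_derivative exp (- K * (r - a)) * (K * (\<phi> r - \<psi> r)))
                 (at r within {a..s})"
      unfolding \<rho>_def has_real_derivative_iff_has_vector_derivative[symmetric]
      by (auto intro!: derivative_eq_intros simp: algebra_simps)
  qed (use s in auto)
  moreover have "exp (- K * (r - a)) * (K * (\<phi> r - \<psi> r)) \<le> 0" if "r \<in> {a..s}" for r
    using le[of r] that sub K by (auto simp: \<psi>_def mult_nonpos_nonneg mult_le_0_iff)
  ultimately have "\<rho> s - \<rho> a \<le> 0"
    using has_integral_le[OF _ has_integral_0] by blast
  then have "exp (- K * (s - a)) * \<psi> s \<le> \<alpha>" by (simp add: \<rho>_def \<psi>_def)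
  then have "exp (K * (s - a)) * (exp (- K * (s - a)) * \<psi> s) \<le> exp (K * (s - a)) * \<alpha>"
    by (rule mult_left_mono) simp
  then have "\<psi> s \<le> \<alpha> * exp (K * (s - a))"
    by (simp add: mult.assoc[symmetric] exp_add[symmetric] mult.commute[of _ \<alpha>])
  then show ?thesis using le[OF s] by (simp add: \<psi>_def)
qed

lemma has_integral_power_div_fact:
  fixes a s :: real
  assumes "a \<le> s"
  shows "((\<lambda>r. (r - a) ^ k / fact k) has_integral (s - a) ^ Suc k / fact (Suc k)) {a..s}"
proof -
  have "((\<lambda>r. (r - a) ^ k / fact k) has_integral
          (s - a) ^ Suc k / fact (Suc k) - (a - a) ^ Suc k / fact (Suc k)) {a..s}"
  proof (rule fundamental_theorem_of_calculus[OF assms])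
    fix r assume "r \<in> {a..s}"
    show "((\<lambda>r. (r - a) ^ Suc k / fact (Suc k)) has_vector_derivative (r - a) ^ k / fact k)
            (at r within {a..s})"
    proof -
      have "((\<lambda>r. (r - a) ^ Suc k / fact (Suc k)) has_real_derivative
              (1 + real k) * (1 * (r - a) ^ k) / fact (Suc k)) (at r within {a..s})"
        by (intro DERIV_cdivide DERIV_power_Suc derivative_eq_intros) auto
      moreover have "(1 + real k) * (1 * (r - a) ^ k) / fact (Suc k) = (r - a) ^ k / fact k"
        by (simp add: fact_Suc[of k] add.commute)
      ultimately show ?thesis
        by (simp add: has_real_derivative_iff_has_vector_derivative)
    qed
  qed
  then show ?thesis by simp
qed

definition volterra_map ::
  "('a \<Rightarrow> 'b \<Rightarrow> 'b::real_normed_vector) \<Rightarrow> (real \<Rightarrow> 'a) \<Rightarrow> (real \<Rightarrow> 'b) \<Rightarrow> real \<Rightarrow>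
     (real \<Rightarrow> 'b) \<Rightarrow> real \<Rightarrow> 'b" where
  "volterra_map m A h a y s = h s + integral {a..s} (\<lambda>r. m (A r) (y r))"

lemma continuous_on_bilinear_coefficient:
  fixes prod :: "'a::real_normed_vector \<Rightarrow> 'b::real_normed_vector \<Rightarrow> 'c::real_normed_vector"
  assumes "bounded_bilinear prod" "continuous_on {a..b} A" "continuous_on {a..b} y"
    and "S \<subseteq> {a..b}"
  shows "continuous_on S (\<lambda>r. prod (A r) (y r))"
  using assms
  by (intro bounded_bilinear.continuous_on[OF assms(1)]) (auto intro: continuous_on_subset)

lemma continuous_on_volterra_map:
  fixes prod :: "'a::real_normed_vector \<Rightarrow> 'b::banach \<Rightarrow> 'b"
  assumes "bounded_bilinear prod" "continuous_on {a..b} A" "continuous_on {a..b} h"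
    and "continuous_on {a..b} y"
  shows "continuous_on {a..b} (volterra_map prod A h a y)"
proof -
  have "continuous_on {a..b} (\<lambda>s. integral {a..s} (\<lambda>r. prod (A r) (y r)))"
    by (rule indefinite_integral_continuous_1[OF integrable_continuous_real
          [OF continuous_on_bilinear_coefficient[OF assms(1,2,4) order_refl]]])
  then show ?thesis
    unfolding volterra_map_def[abs_def] by (intro continuous_on_add assms(3))
qed

lemma volterra_map_iterate_diff_le:
  fixes prod :: "'a::real_normed_vector \<Rightarrow> 'b::euclidean_space \<Rightarrow> 'b"
    and A :: "real \<Rightarrow> 'a" and h :: "real \<Rightarrow> 'b" and a :: real
  defines "P k \<equiv> (volterra_map prod A h a ^^ k) h"
  assumes bb: "bounded_bilinear prod"
    and A: "continuous_on {a..b} A" and h: "continuous_on {a..b} h"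
    and K: "K \<ge> 0" "\<And>r y. r \<in> {a..b} \<Longrightarrow> norm (prod (A r) y) \<le> K * norm y"
    and C: "\<And>s. s \<in> {a..b} \<Longrightarrow> norm (P 1 s - P 0 s) \<le> C"
    and s: "s \<in> {a..b}"
  shows "norm (P (Suc k) s - P k s) \<le> C * (K * (s - a)) ^ k / fact k"
  using s
proof (induction k arbitrary: s)
  case 0
  then show ?case using C by simp
next
  case (Suc k)
  have cont: "continuous_on {a..b} (P k)" for k
    unfolding P_def by (induction k) (auto intro: continuous_on_volterra_map[OF bb A h] h)
  have sub: "{a..s} \<subseteq> {a..b}" using Suc.prems by auto
  have int_prod: "(\<lambda>r. prod (A r) (P k r)) integrable_on {a..s}" for k
    by (intro integrable_continuous_real continuous_on_bilinear_coefficient[OF bb A cont sub])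
  have int: "((\<lambda>r. C * K ^ Suc k * ((r - a) ^ k / fact k)) has_integral
               C * K ^ Suc k * ((s - a) ^ Suc k / fact (Suc k))) {a..s}"
    using Suc.prems by (intro has_integral_mult_right has_integral_power_div_fact) auto
  have "P (Suc (Suc k)) s - P (Suc k) s
          = integral {a..s} (\<lambda>r. prod (A r) (P (Suc k) r))
            - integral {a..s} (\<lambda>r. prod (A r) (P k r))"
    by (simp add: P_def volterra_map_def)
  also have "\<dots> = integral {a..s} (\<lambda>r. prod (A r) (P (Suc k) r - P k r))"
    by (simp add: integral_diff[OF int_prod int_prod, symmetric] bounded_bilinear.diff_right[OF bb])
  also have "norm \<dots> \<le> integral {a..s} (\<lambda>r. C * K ^ Suc k * ((r - a) ^ k / fact k))"
  proof (rule integral_norm_bound_integral)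
    show "(\<lambda>r. prod (A r) (P (Suc k) r - P k r)) integrable_on {a..s}"
      by (intro integrable_continuous_real continuous_on_bilinear_coefficient[OF bb A _ sub]
          continuous_on_diff cont)
    show "(\<lambda>r. C * K ^ Suc k * ((r - a) ^ k / fact k)) integrable_on {a..s}"
      using int by blast
    fix r assume "r \<in> {a..s}"
    then have r: "r \<in> {a..b}" using sub by auto
    have "norm (prod (A r) (P (Suc k) r - P k r)) \<le> K * (C * (K * (r - a)) ^ k / fact k)"
      using K(2)[OF r, of "P (Suc k) r - P k r"] mult_left_mono[OF Suc.IH[OF r] K(1)] by linarith
    then show "norm (prod (A r) (P (Suc k) r - P k r)) \<le> C * K ^ Suc k * ((r - a) ^ k / fact k)"
      by (simp add: power_mult_distrib mult_ac)
  qed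
  also have "\<dots> = C * (K * (s - a)) ^ Suc k / fact (Suc k)"
    using integral_unique[OF int] by (simp add: power_mult_distrib del: fact_Suc)
  finally show ?case .
qed

lemma volterra_map_uniform_limit_fixed_point:
  fixes prod :: "'a::real_normed_vector \<Rightarrow> 'b::euclidean_space \<Rightarrow> 'b"
  assumes bb: "bounded_bilinear prod" and A: "continuous_on {a..b} A"
    and P: "\<And>n. continuous_on {a..b} (P n)" "\<And>n. P (Suc n) = volterra_map prod A h a (P n)"
    and lim: "uniform_limit {a..b} P x sequentially" and s: "s \<in> {a..b}"
  shows "x s = volterra_map prod A h a x s"
proof -
  have sub: "{a..s} \<subseteq> {a..b}" using s by auto
  have x: "continuous_on {a..b} x"
    by (rule uniform_limit_theorem[OF always_eventually lim]) (use P in auto)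
  have bA: "bounded (A ` {a..s})" and bx: "bounded (x ` {a..s})"
    using compact_continuous_image[OF continuous_on_subset[OF A sub]]
      compact_continuous_image[OF continuous_on_subset[OF x sub]]
    by (auto intro: compact_imp_bounded)
  have ul: "uniform_limit {a..s} (\<lambda>n r. prod (A r) (P n r)) (\<lambda>r. prod (A r) (x r)) sequentially"
    by (rule bounded_bilinear.bounded_uniform_limit[OF bb uniform_limit_const
          uniform_limit_on_subset[OF lim sub] bx bA])
  have "continuous_on {a..s} (\<lambda>r. prod (A r) (P n r))" for n
    by (rule continuous_on_bilinear_coefficient[OF bb A P(1) sub])
  then obtain I J where I: "\<And>n. ((\<lambda>r. prod (A r) (P n r)) has_integral I n) {a..s}"
    and J: "((\<lambda>r. prod (A r) (x r)) has_integral J) {a..s}" and IJ: "I \<longlonglongrightarrow> J"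
    by (rule uniform_limit_integral[OF ul]) auto
  have "(\<lambda>n. P (Suc n) s) \<longlonglongrightarrow> x s"
    using LIMSEQ_Suc[OF tendsto_uniform_limitI[OF lim s]] .
  moreover have "(\<lambda>n. P (Suc n) s) = (\<lambda>n. h s + I n)"
    by (simp add: P(2) volterra_map_def integral_unique[OF I])
  moreover have "(\<lambda>n. h s + I n) \<longlonglongrightarrow> h s + J"
    using IJ by (intro tendsto_intros)
  ultimately show ?thesis
    using LIMSEQ_unique integral_unique[OF J] by (metis volterra_map_def)
qed

text \<open>Picard iteration: the successive differences are dominated by the terms of an exponential
  series, so the iterates converge uniformly by the Weierstrass M-test.\<close>

lemma linear_volterra_solution_exists:
  fixes prod :: "'a::real_normed_vector \<Rightarrow> 'b::euclidean_space \<Rightarrow> 'b"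
    and A :: "real \<Rightarrow> 'a" and h :: "real \<Rightarrow> 'b"
  assumes bb: "bounded_bilinear prod"
    and A: "continuous_on {a..b} A" and h: "continuous_on {a..b} h"
  obtains x where "continuous_on {a..b} x"
    and "\<And>s. s \<in> {a..b} \<Longrightarrow> x s = h s + integral {a..s} (\<lambda>r. prod (A r) (x r))"
proof -
  define P where "P k = (volterra_map prod A h a ^^ k) h" for k
  have P_cont: "continuous_on {a..b} (P k)" for k
    unfolding P_def by (induction k) (auto intro: continuous_on_volterra_map[OF bb A h] h)
  obtain K where K: "K > 0" "\<And>r y. r \<in> {a..b} \<Longrightarrow> norm (prod (A r) y) \<le> K * norm y"
    using bounded_bilinear_continuous_coefficient_bound[OF bb A compact_Icc] by blast
  obtain C where C: "C > 0" "\<And>s. s \<in> {a..b} \<Longrightarrow> norm (P 1 s - P 0 s) \<le> C"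
    using continuous_on_compact_norm_bound[OF continuous_on_diff[OF P_cont P_cont] compact_Icc]
    by blast
  define M where "M k = C * (inverse (fact k) * (K * (b - a)) ^ k)" for k
  have "norm (P (Suc k) s - P k s) \<le> M k" if "s \<in> {a..b}" for k s
  proof -
    have "norm (P (Suc k) s - P k s) \<le> C * (inverse (fact k) * (K * (s - a)) ^ k)"
      using volterra_map_iterate_diff_le[OF bb A h less_imp_le[OF K(1)] K(2)
          C(2)[unfolded P_def] that]
      by (simp add: P_def field_simps)
    also have "\<dots> \<le> M k"
      unfolding M_def using that K C by (intro mult_left_mono power_mono) auto
    finally show ?thesis .
  qed
  moreover have "summable M"
    unfolding M_def by (intro summable_mult summable_exp)
  ultimately have series: "uniform_limit {a..b} (\<lambda>n s. \<Sum>i<n. P (Suc i) s - P i s)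
                             (\<lambda>s. \<Sum>i. P (Suc i) s - P i s) sequentially"
    by (intro Weierstrass_m_test) auto
  define x where "x = (\<lambda>s. h s + (\<Sum>i. P (Suc i) s - P i s))"
  have "h s + (\<Sum>i<n. P (Suc i) s - P i s) = P n s" for n s
    using sum_lessThan_telescope[of "\<lambda>i. P i s" n] by (simp add: P_def)
  then have lim: "uniform_limit {a..b} P x sequentially"
    using uniform_limit_add[OF uniform_limit_const[where c=h] series] by (simp add: x_def)
  show thesis
  proof (rule that)
    show "continuous_on {a..b} x"
      by (rule uniform_limit_theorem[OF always_eventually lim]) (use P_cont in auto)
    fix s assume "s \<in> {a..b}"
    then show "x s = h s + integral {a..s} (\<lambda>r. prod (A r) (x r))"
      using volterra_map_uniform_limit_fixed_point[OF bb A P_cont _ lim]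
      by (simp add: P_def volterra_map_def)
  qed
qed

lemma linear_volterra_homogeneous_eq_0:
  fixes prod :: "'a::real_normed_vector \<Rightarrow> 'b::euclidean_space \<Rightarrow> 'b"
    and A :: "real \<Rightarrow> 'a" and x :: "real \<Rightarrow> 'b"
  assumes bb: "bounded_bilinear prod"
    and A: "continuous_on {a..b} A" and x: "continuous_on {a..b} x"
    and eq: "\<And>s. s \<in> {a..b} \<Longrightarrow> x s = integral {a..s} (\<lambda>r. prod (A r) (x r))"
    and s: "s \<in> {a..b}"
  shows "x s = 0"
proof -
  obtain K where K: "K > 0" and KA: "\<And>r y. r \<in> {a..b} \<Longrightarrow> norm (prod (A r) y) \<le> K * norm y"
    using bounded_bilinear_continuous_coefficient_bound[OF bb A compact_Icc] by blast
  have norm_cont: "continuous_on {a..b} (\<lambda>r. norm (x r))"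
    using x by (intro continuous_intros)
  have "norm (x s) \<le> 0 + K * integral {a..s} (\<lambda>r. norm (x r))" if s: "s \<in> {a..b}" for s
  proof -
    have sub: "{a..s} \<subseteq> {a..b}" using s by auto
    have "norm (x s) \<le> integral {a..s} (\<lambda>r. K * norm (x r))"
      unfolding eq[OF s]
    proof (rule integral_norm_bound_integral)
      show "(\<lambda>r. prod (A r) (x r)) integrable_on {a..s}"
        by (intro integrable_continuous_real continuous_on_bilinear_coefficient[OF bb A x sub])
      show "(\<lambda>r. K * norm (x r)) integrable_on {a..s}"
        by (intro integrable_continuous_real continuous_intros continuous_on_subset[OF x sub])
    qed (use KA sub in auto)
    then show ?thesis by simp
  qed
  from gronwall_inequality[OF norm_cont less_imp_le[OF K] this s] show ?thesis
    by simp
qed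

section \<open>Linear differential equations\<close>

lemma has_integral_Icc_diff_left:
  fixes f :: "real \<Rightarrow> 'a::banach"
  assumes "(f has_integral I) {a..b}" "(f has_integral J) {a..c}" "a \<le> c" "c \<le> b"
  shows "(f has_integral I - J) {c..b}"
proof -
  have "f integrable_on {c..b}"
    using integrable_on_subinterval[of f "{a..b}" c b] assms(1,3) by auto
  then obtain K where K: "(f has_integral K) {c..b}"
    by (auto simp: integrable_on_def)
  have "I = J + K"
    using has_integral_unique[OF assms(1) has_integral_combine[OF assms(3,4,2) K]] .
  then show ?thesis using K by simp
qed

lemma has_integral_Icc_diff_right:
  fixes f :: "real \<Rightarrow> 'a::banach"
  assumes "(f has_integral I) {a..b}" "(f has_integral J) {c..b}" "a \<le> c" "c \<le> b"
  shows "(f has_integral I - J) {a..c}"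
proof -
  have "f integrable_on {a..c}"
    using integrable_on_subinterval[of f "{a..b}" a c] assms(1,4) by auto
  then obtain K where K: "(f has_integral K) {a..c}"
    by (auto simp: integrable_on_def)
  have "I = K + J"
    using has_integral_unique[OF assms(1) has_integral_combine[OF assms(3,4) K assms(2)]] .
  then show ?thesis using K by simp
qed

lemma has_vector_derivative_indefinite_integral_plus:
  fixes g :: "real \<Rightarrow> 'a::banach"
  assumes "continuous_on {a..b} g" "\<And>s. s \<in> {a..b} \<Longrightarrow> y s = c + integral {a..s} g"
    and "r \<in> {a..b}"
  shows "(y has_vector_derivative g r) (at r within {a..b})"
proof -
  have "((\<lambda>s. c + integral {a..s} g) has_vector_derivative 0 + g r) (at r within {a..b})"
    by (intro has_vector_derivative_add has_vector_derivative_const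
        integral_has_vector_derivative assms(1,3))
  then show ?thesis
    by (intro has_vector_derivative_transform[OF assms(3) assms(2)]) simp_all
qed

definition lin_ode_sol ::
  "(real \<Rightarrow> real^'n^'n) \<Rightarrow> (real \<Rightarrow> real^'n) \<Rightarrow> real \<Rightarrow> real \<Rightarrow> (real \<Rightarrow> real^'n) \<Rightarrow> bool" where
  "lin_ode_sol A f a b \<xi> \<longleftrightarrow>
     (\<forall>s\<in>{a..b}. ((\<lambda>r. A r *v \<xi> r + f r) has_integral \<xi> s - \<xi> a) {a..s})"

lemma lin_ode_solD:
  "lin_ode_sol A f a b \<xi> \<Longrightarrow> s \<in> {a..b} \<Longrightarrow>
     ((\<lambda>r. A r *v \<xi> r + f r) has_integral \<xi> s - \<xi> a) {a..s}"
  by (simp add: lin_ode_sol_def)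

lemma lin_ode_sol_continuous:
  assumes "lin_ode_sol A f a b \<xi>"
  shows "continuous_on {a..b} \<xi>"
proof (cases "a \<le> b")
  case True
  have eq: "\<xi> s = \<xi> a + integral {a..s} (\<lambda>r. A r *v \<xi> r + f r)" if "s \<in> {a..b}" for s
    using integral_unique[OF lin_ode_solD[OF assms that]] by simp
  have "((\<lambda>r. A r *v \<xi> r + f r) has_integral \<xi> b - \<xi> a) {a..b}"
    using lin_ode_solD[OF assms, of b] True by simp
  then have "(\<lambda>r. A r *v \<xi> r + f r) integrable_on {a..b}"
    by (rule has_integral_integrable)
  then have "continuous_on {a..b} (\<lambda>s. \<xi> a + integral {a..s} (\<lambda>r. A r *v \<xi> r + f r))"
    by (intro continuous_on_add continuous_on_const indefinite_integral_continuous_1)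
  then show ?thesis
    by (rule continuous_on_eq) (metis eq)
qed simp

lemma lin_ode_sol_subinterval:
  assumes "lin_ode_sol A f a b \<xi>" "a \<le> c" "c \<le> d" "d \<le> b"
  shows "lin_ode_sol A f c d \<xi>"
  unfolding lin_ode_sol_def
proof
  fix s assume s: "s \<in> {c..d}"
  have "((\<lambda>r. A r *v \<xi> r + f r) has_integral (\<xi> s - \<xi> a) - (\<xi> c - \<xi> a)) {c..s}"
    using s assms
    by (intro has_integral_Icc_diff_left[OF lin_ode_solD[OF assms(1)] lin_ode_solD[OF assms(1)]])
      auto
  then show "((\<lambda>r. A r *v \<xi> r + f r) has_integral \<xi> s - \<xi> c) {c..s}"
    by simp
qed

lemma lin_ode_sol_of_terminal:
  assumes "a \<le> b"
    and "\<And>s. s \<in> {a..b} \<Longrightarrow> ((\<lambda>r. A r *v \<xi> r + f r) has_integral z - \<xi> s) {s..b}"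
  shows "lin_ode_sol A f a b \<xi>" and "\<xi> b = z"
proof -
  have "((\<lambda>r. A r *v \<xi> r + f r) has_integral z - \<xi> b) {b}"
    using assms(2)[of b] assms(1) by simp
  then show "\<xi> b = z"
    using has_integral_unique[OF _ has_integral_refl(2)] by force
  show "lin_ode_sol A f a b \<xi>"
    unfolding lin_ode_sol_def
  proof
    fix s assume s: "s \<in> {a..b}"
    have "((\<lambda>r. A r *v \<xi> r + f r) has_integral (z - \<xi> a) - (z - \<xi> s)) {a..s}"
      using s assms(1) by (intro has_integral_Icc_diff_right[OF assms(2) assms(2)]) auto
    then show "((\<lambda>r. A r *v \<xi> r + f r) has_integral \<xi> s - \<xi> a) {a..s}"
      by simp
  qed
qed

lemma lin_ode_sol_diff:
  assumes "lin_ode_sol A f a b \<xi>" "lin_ode_sol A g a b \<zeta>"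
  shows "lin_ode_sol A (\<lambda>r. f r - g r) a b (\<lambda>s. \<xi> s - \<zeta> s)"
  unfolding lin_ode_sol_def
proof
  fix s assume "s \<in> {a..b}"
  have "((\<lambda>r. (A r *v \<xi> r + f r) - (A r *v \<zeta> r + g r)) has_integral
          (\<xi> s - \<xi> a) - (\<zeta> s - \<zeta> a)) {a..s}"
    by (rule has_integral_diff[OF lin_ode_solD[OF assms(1) \<open>s \<in> {a..b}\<close>]
          lin_ode_solD[OF assms(2) \<open>s \<in> {a..b}\<close>]])
  moreover have "(\<lambda>r. (A r *v \<xi> r + f r) - (A r *v \<zeta> r + g r))
                   = (\<lambda>r. A r *v (\<xi> r - \<zeta> r) + (f r - g r))"
    by (auto simp: fun_eq_iff matrix_vector_mult_diff_distrib)
  moreover have "(\<xi> s - \<xi> a) - (\<zeta> s - \<zeta> a) = (\<xi> s - \<zeta> s) - (\<xi> a - \<zeta> a)"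
    by simp
  ultimately show "((\<lambda>r. A r *v (\<xi> r - \<zeta> r) + (f r - g r)) has_integral
                     (\<xi> s - \<zeta> s) - (\<xi> a - \<zeta> a)) {a..s}"
    by simp
qed

lemma lin_ode_sol_sum:
  assumes "finite I" "\<And>i. i \<in> I \<Longrightarrow> lin_ode_sol A (f i) a b (\<xi> i)"
  shows "lin_ode_sol A (\<lambda>r. \<Sum>i\<in>I. c i *\<^sub>R f i r) a b (\<lambda>s. \<Sum>i\<in>I. c i *\<^sub>R \<xi> i s)"
  unfolding lin_ode_sol_def
proof
  fix s assume s: "s \<in> {a..b}"
  have "((\<lambda>r. \<Sum>i\<in>I. c i *\<^sub>R (A r *v \<xi> i r + f i r)) has_integral
          (\<Sum>i\<in>I. c i *\<^sub>R (\<xi> i s - \<xi> i a))) {a..s}"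
    using assms s by (intro has_integral_sum has_integral_cmul lin_ode_solD) auto
  moreover have "(\<Sum>i\<in>I. c i *\<^sub>R (A r *v \<xi> i r + f i r))
                   = A r *v (\<Sum>i\<in>I. c i *\<^sub>R \<xi> i r) + (\<Sum>i\<in>I. c i *\<^sub>R f i r)" for r
    by (simp add: linear_sum[OF matrix_vector_mul_linear] matrix_vector_mult_scaleR
        scaleR_add_right sum.distrib)
  ultimately show "((\<lambda>r. A r *v (\<Sum>i\<in>I. c i *\<^sub>R \<xi> i r) + (\<Sum>i\<in>I. c i *\<^sub>R f i r)) has_integral
                     (\<Sum>i\<in>I. c i *\<^sub>R \<xi> i s) - (\<Sum>i\<in>I. c i *\<^sub>R \<xi> i a)) {a..s}"
    by (simp add: scaleR_diff_right sum_subtractf)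
qed

lemma lin_ode_sol_unique:
  assumes A: "continuous_on {a..b} A"
    and sol: "lin_ode_sol A f a b \<xi>" "lin_ode_sol A f a b \<zeta>" and init: "\<xi> a = \<zeta> a"
    and s: "s \<in> {a..b}"
  shows "\<xi> s = \<zeta> s"
proof -
  have diff: "lin_ode_sol A (\<lambda>_. 0) a b (\<lambda>s. \<xi> s - \<zeta> s)"
    using lin_ode_sol_diff[OF sol] by simp
  have "\<xi> s - \<zeta> s = 0"
  proof (rule linear_volterra_homogeneous_eq_0[OF bounded_bilinear_matrix_vector_mult A _ _ s])
    show "continuous_on {a..b} (\<lambda>s. \<xi> s - \<zeta> s)"
      by (rule lin_ode_sol_continuous[OF diff])
    fix s assume "s \<in> {a..b}"
    then show "\<xi> s - \<zeta> s = integral {a..s} (\<lambda>r. A r *v (\<xi> r - \<zeta> r))"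
      using integral_unique[OF lin_ode_solD[OF diff]] init by simp
  qed
  then show ?thesis by simp
qed

lemma lin_ode_sol_exists:
  assumes "a \<le> b" and A: "continuous_on {a..b} A" and f: "f integrable_on {a..b}"
  obtains \<xi> where "\<xi> a = x" "lin_ode_sol A f a b \<xi>"
proof -
  have "continuous_on {a..b} (\<lambda>s. x + integral {a..s} f)"
    by (intro continuous_on_add continuous_on_const indefinite_integral_continuous_1 f)
  then obtain \<xi> where \<xi>: "continuous_on {a..b} \<xi>"
    and eq: "\<And>s. s \<in> {a..b} \<Longrightarrow> \<xi> s = (x + integral {a..s} f) + integral {a..s} (\<lambda>r. A r *v \<xi> r)"
    using linear_volterra_solution_exists[OF bounded_bilinear_matrix_vector_mult A] by blast
  have init: "\<xi> a = x"
    using eq[of a] assms(1) by simp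
  have "lin_ode_sol A f a b \<xi>"
    unfolding lin_ode_sol_def
  proof
    fix s assume s: "s \<in> {a..b}"
    then have sub: "{a..s} \<subseteq> {a..b}" by auto
    have "continuous_on {a..s} (\<lambda>r. A r *v \<xi> r)"
      by (intro bounded_bilinear.continuous_on[OF bounded_bilinear_matrix_vector_mult]
          continuous_on_subset[OF A sub] continuous_on_subset[OF \<xi> sub])
    then have "((\<lambda>r. A r *v \<xi> r) has_integral integral {a..s} (\<lambda>r. A r *v \<xi> r)) {a..s}"
      by (intro integrable_integral integrable_continuous_real)
    moreover have "(f has_integral integral {a..s} f) {a..s}"
      by (intro integrable_integral integrable_on_subinterval[OF f sub])
    ultimately have "((\<lambda>r. A r *v \<xi> r + f r) has_integral
                       integral {a..s} (\<lambda>r. A r *v \<xi> r) + integral {a..s} f) {a..s}"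
      by (rule has_integral_add)
    then show "((\<lambda>r. A r *v \<xi> r + f r) has_integral \<xi> s - \<xi> a) {a..s}"
      using eq[OF s] init by (simp add: algebra_simps)
  qed
  with init show thesis by (rule that)
qed

lemma norm_lin_ode_rhs_le:
  fixes M :: "real^'n^'m"
  assumes "norm M \<le> K" "norm v \<le> R" "norm w \<le> C" "K \<ge> 0"
  shows "norm (M *v v + w) \<le> K * R + C"
proof -
  have "norm (M *v v) \<le> K * R"
    using norm_matrix_vector_mult_le[of M v] mult_mono[OF assms(1,2) assms(4) norm_ge_zero] by simp
  then show ?thesis
    using norm_triangle_ineq[of "M *v v" w] assms(3) by simp
qed

lemma lin_ode_sol_norm_bound:
  assumes sol: "lin_ode_sol A f a b \<xi>" and init: "\<xi> a = 0"
    and A: "\<And>r. r \<in> {a..b} \<Longrightarrow> norm (A r) \<le> KA" and KA: "KA \<ge> 0"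
    and f: "\<And>r. r \<in> {a..b} \<Longrightarrow> norm (f r) \<le> CF"
    and s: "s \<in> {a..b}"
  shows "norm (\<xi> s) \<le> CF * (b - a) * exp (KA * (b - a))"
proof -
  have CF: "CF \<ge> 0"
    using f[OF s] norm_ge_zero order_trans by blast
  have cont: "continuous_on {a..b} (\<lambda>r. norm (\<xi> r))"
    using lin_ode_sol_continuous[OF sol] by (intro continuous_on_norm)
  have "norm (\<xi> s) \<le> CF * (b - a) + KA * integral {a..s} (\<lambda>r. norm (\<xi> r))"
    if s: "s \<in> {a..b}" for s
  proof -
    have sub: "{a..s} \<subseteq> {a..b}" using s by auto
    have int: "((\<lambda>r. KA * norm (\<xi> r) + CF) has_integral
                 KA * integral {a..s} (\<lambda>r. norm (\<xi> r)) + CF * (s - a)) {a..s}"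
    proof (rule has_integral_add)
      show "((\<lambda>r. KA * norm (\<xi> r)) has_integral KA * integral {a..s} (\<lambda>r. norm (\<xi> r))) {a..s}"
        by (intro has_integral_mult_right integrable_integral integrable_continuous_real
            continuous_on_subset[OF cont sub])
      show "((\<lambda>r. CF) has_integral CF * (s - a)) {a..s}"
        using has_integral_const_real[of CF a s] s by (simp add: mult.commute)
    qed
    have "norm (\<xi> s) = norm (integral {a..s} (\<lambda>r. A r *v \<xi> r + f r))"
      using integral_unique[OF lin_ode_solD[OF sol s]] init by simp
    also have "\<dots> \<le> integral {a..s} (\<lambda>r. KA * norm (\<xi> r) + CF)"
      using lin_ode_solD[OF sol s] int sub
      by (intro integral_norm_bound_integral norm_lin_ode_rhs_le A f KA order_refl)
        (auto simp: has_integral_integrable)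
    also have "\<dots> \<le> CF * (b - a) + KA * integral {a..s} (\<lambda>r. norm (\<xi> r))"
      using integral_unique[OF int] s CF by (simp add: mult_left_mono)
    finally show ?thesis .
  qed
  from gronwall_inequality[OF cont KA this s]
  have "norm (\<xi> s) \<le> CF * (b - a) * exp (KA * (s - a))" .
  also have "\<dots> \<le> CF * (b - a) * exp (KA * (b - a))"
    using s CF KA by (intro mult_left_mono mult_nonneg_nonneg) (auto intro: mult_left_mono)
  finally show ?thesis .
qed

lemma lin_ode_sol_lipschitz:
  assumes sol: "lin_ode_sol A f a b \<xi>"
    and A: "\<And>r. r \<in> {a..b} \<Longrightarrow> norm (A r) \<le> KA" and KA: "KA \<ge> 0"
    and f: "\<And>r. r \<in> {a..b} \<Longrightarrow> norm (f r) \<le> CF"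
    and \<xi>: "\<And>r. r \<in> {a..b} \<Longrightarrow> norm (\<xi> r) \<le> R"
    and s: "a \<le> s1" "s1 \<le> s2" "s2 \<le> b"
  shows "norm (\<xi> s2 - \<xi> s1) \<le> (KA * R + CF) * (s2 - s1)"
proof -
  have s1: "s1 \<in> {a..b}" using s by auto
  have nonneg: "KA * R + CF \<ge> 0"
    using A[OF s1] \<xi>[OF s1] f[OF s1] KA norm_ge_zero
    by (metis add_nonneg_nonneg mult_nonneg_nonneg order_trans)
  have "((\<lambda>r. A r *v \<xi> r + f r) has_integral \<xi> s2 - \<xi> s1) {s1..s2}"
    using lin_ode_solD[OF lin_ode_sol_subinterval[OF sol s]] s by simp
  then have "norm (\<xi> s2 - \<xi> s1) \<le> (KA * R + CF) * measure lborel {s1..s2}"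
    by (rule has_integral_bound_real[OF nonneg finite.emptyI])
      (use s in \<open>auto intro!: norm_lin_ode_rhs_le A f \<xi> KA\<close>)
  then show ?thesis
    using s by simp
qed

lemma has_integral_vector_derivative_within_Icc:
  fixes f :: "real \<Rightarrow> 'a::banach"
  assumes "\<And>r. r \<in> {a..b} \<Longrightarrow> (f has_vector_derivative f' r) (at r within {a..b})"
    and "a \<le> c" "c \<le> s" "s \<le> b"
  shows "(f' has_integral f s - f c) {c..s}"
proof (rule fundamental_theorem_of_calculus[OF assms(3)])
  fix r assume "r \<in> {c..s}"
  then show "(f has_vector_derivative f' r) (at r within {c..s})"
    using assms by (intro has_vector_derivative_within_subset[OF assms(1)]) auto
qed

lemma bounded_bilinear_neg_matrix_mult_flip:
  "bounded_bilinear (\<lambda>(A::real^'n^'n) (W::real^'n^'n). - (W ** A))"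
  by (rule bilinear_conv_bounded_bilinear[THEN iffD1])
    (auto simp: bilinear_def linear_iff matrix_matrix_mult_def vec_eq_iff sum.distrib
      sum_distrib_left sum_distrib_right algebra_simps)

lemma matrix_ode_left_inverse:
  fixes A Z W :: "real \<Rightarrow> real^'n^'n"
  assumes dZ: "\<And>r. r \<in> {a..b} \<Longrightarrow> (Z has_vector_derivative A r ** Z r) (at r within {a..b})"
    and dW: "\<And>r. r \<in> {a..b} \<Longrightarrow> (W has_vector_derivative - (W r ** A r)) (at r within {a..b})"
    and init: "W a ** Z a = mat 1" and t: "t \<in> {a..b}"
  shows "W t ** Z t = mat 1"
proof -
  have bb: "bounded_bilinear ((**) :: real^'n^'n \<Rightarrow> real^'n^'n \<Rightarrow> real^'n^'n)"
    by (rule bounded_bilinear_matrix_matrix_mult)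
  have "\<exists>C. \<forall>r\<in>{a..b}. W r ** Z r = C"
  proof (rule has_derivative_zero_constant)
    fix r assume r: "r \<in> {a..b}"
    have "((\<lambda>r. W r ** Z r) has_vector_derivative W r ** (A r ** Z r) + (- (W r ** A r)) ** Z r)
            (at r within {a..b})"
      by (rule bounded_bilinear.has_vector_derivative[OF bb dW[OF r] dZ[OF r]])
    moreover have "W r ** (A r ** Z r) + (- (W r ** A r)) ** Z r = 0"
      by (simp add: bounded_bilinear.minus_left[OF bb] matrix_mul_assoc)
    ultimately show "((\<lambda>r. W r ** Z r) has_derivative (\<lambda>h. 0)) (at r within {a..b})"
      by (simp add: has_vector_derivative_def)
  qed simp
  moreover have "a \<in> {a..b}"
    using t by auto
  ultimately show ?thesis
    using init t by metis
qed

lemma fundamental_matrix_exists: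
  fixes A :: "real \<Rightarrow> real^'n^'n"
  assumes A: "continuous_on {a..b} A" and t: "t \<in> {a..b}"
  obtains Y where "Y t = mat 1"
    and "\<And>r. r \<in> {a..b} \<Longrightarrow> (Y has_vector_derivative A r ** Y r) (at r within {a..b})"
proof -
  have bb: "bounded_bilinear ((**) :: real^'n^'n \<Rightarrow> real^'n^'n \<Rightarrow> real^'n^'n)"
    by (rule bounded_bilinear_matrix_matrix_mult)
  have a: "a \<in> {a..b}" using t by auto
  obtain Z where Zc: "continuous_on {a..b} Z"
    and Z: "\<And>s. s \<in> {a..b} \<Longrightarrow> Z s = mat 1 + integral {a..s} (\<lambda>r. A r ** Z r)"
    using linear_volterra_solution_exists[OF bb A continuous_on_const] by blast
  obtain W where Wc: "continuous_on {a..b} W"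
    and W: "\<And>s. s \<in> {a..b} \<Longrightarrow> W s = mat 1 + integral {a..s} (\<lambda>r. - (W r ** A r))"
    using linear_volterra_solution_exists[OF bounded_bilinear_neg_matrix_mult_flip A
        continuous_on_const] by blast
  have dZ: "(Z has_vector_derivative A r ** Z r) (at r within {a..b})" if "r \<in> {a..b}" for r
    by (rule has_vector_derivative_indefinite_integral_plus[OF _ Z that])
      (intro bounded_bilinear.continuous_on[OF bb] A Zc)
  have dW: "(W has_vector_derivative - (W r ** A r)) (at r within {a..b})" if "r \<in> {a..b}" for r
    by (rule has_vector_derivative_indefinite_integral_plus[OF _ W that])
      (intro continuous_on_minus bounded_bilinear.continuous_on[OF bb] A Wc)
  have "Z a = mat 1" "W a = mat 1"
    using Z[OF a] W[OF a] by simp_all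
  then have "W a ** Z a = mat 1"
    by (simp add: matrix_mul_lid)
  then have "W t ** Z t = mat 1"
    using matrix_ode_left_inverse[OF dZ dW] t by blast
  then have "Z t ** W t = mat 1"
    using matrix_left_right_inverse by blast
  show thesis
  proof (rule that[of "\<lambda>s. Z s ** W t"])
    show "Z t ** W t = mat 1" by fact
    fix r assume r: "r \<in> {a..b}"
    have "((\<lambda>s. Z s ** W t) has_vector_derivative Z r ** 0 + (A r ** Z r) ** W t)
            (at r within {a..b})"
      by (rule bounded_bilinear.has_vector_derivative[OF bb dZ[OF r] has_vector_derivative_const])
    then show "((\<lambda>s. Z s ** W t) has_vector_derivative A r ** (Z r ** W t)) (at r within {a..b})"
      by (simp add: matrix_mul_assoc bounded_bilinear.zero_right[OF bb])
  qed
qed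

lemma state_trans_eq:
  fixes A :: "real \<Rightarrow> real^'n^'n"
  assumes A: "continuous_on {0..T} A" and t: "t \<in> {0..T}" and s: "s \<in> {t..T}"
    and Yt: "Y t = mat 1"
    and dY: "\<And>r. r \<in> {0..T} \<Longrightarrow> (Y has_vector_derivative A r ** Y r) (at r within {0..T})"
  shows "state_trans A T s t = Y s"
  unfolding state_trans_def
proof (rule the_equality)
  show "\<exists>Y'. Y' t = mat 1
          \<and> (\<forall>r\<in>{0..T}. (Y' has_vector_derivative A r ** Y' r) (at r within {0..T}))
          \<and> Y' s = Y s"
    using Yt dY by blast
  fix M
  assume "\<exists>Y'. Y' t = mat 1
            \<and> (\<forall>r\<in>{0..T}. (Y' has_vector_derivative A r ** Y' r) (at r within {0..T}))
            \<and> Y' s = M"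
  then obtain Y' where Y't: "Y' t = mat 1" and M: "Y' s = M"
    and dY': "\<And>r. r \<in> {0..T} \<Longrightarrow> (Y' has_vector_derivative A r ** Y' r) (at r within {0..T})"
    by blast
  have bb: "bounded_bilinear ((**) :: real^'n^'n \<Rightarrow> real^'n^'n \<Rightarrow> real^'n^'n)"
    by (rule bounded_bilinear_matrix_matrix_mult)
  define D where "D r = Y' r - Y r" for r
  have dD: "(D has_vector_derivative A r ** D r) (at r within {0..T})" if "r \<in> {0..T}" for r
    unfolding D_def using has_vector_derivative_diff[OF dY' dY, OF that that]
    by (simp add: bounded_bilinear.diff_right[OF bb])
  have sub: "{t..T} \<subseteq> {0..T}" using t by auto
  have "D s = 0"
  proof (rule linear_volterra_homogeneous_eq_0[OF bb continuous_on_subset[OF A sub] _ _ s])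
    show "continuous_on {t..T} D"
      using continuous_on_vector_derivative[OF dD] sub by (rule continuous_on_subset)
    fix r assume "r \<in> {t..T}"
    then have "((\<lambda>q. A q ** D q) has_integral D r - D t) {t..r}"
      using t by (intro has_integral_vector_derivative_within_Icc[OF dD]) auto
    then show "D r = integral {t..r} (\<lambda>q. A q ** D q)"
      using Y't Yt by (simp add: D_def integral_unique)
  qed
  then show "M = Y s"
    using M by (simp add: D_def)
qed

lemma fundamental_matrix_lin_ode_sol:
  assumes t: "t \<in> {a..b}"
    and dY: "\<And>r. r \<in> {a..b} \<Longrightarrow> (Y has_vector_derivative A r ** Y r) (at r within {a..b})"
  shows "lin_ode_sol A (\<lambda>_. 0) t b (\<lambda>s. Y s *v v)"
  unfolding lin_ode_sol_def
proof
  fix s assume "s \<in> {t..b}"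
  then have "((\<lambda>r. A r ** Y r) has_integral Y s - Y t) {t..s}"
    using t by (intro has_integral_vector_derivative_within_Icc[OF dY]) auto
  then have "((\<lambda>r. (A r ** Y r) *v v) has_integral (Y s - Y t) *v v) {t..s}"
    using has_integral_linear[OF _ bounded_bilinear.bounded_linear_left
        [OF bounded_bilinear_matrix_vector_mult]] by (auto simp: o_def)
  then show "((\<lambda>r. A r *v (Y r *v v) + 0) has_integral Y s *v v - Y t *v v) {t..s}"
    by (simp add: matrix_vector_mul_assoc matrix_vector_mult_diff_rdistrib)
qed

section \<open>Extremal aiming\<close>

definition grid_index :: "real \<Rightarrow> real \<Rightarrow> nat \<Rightarrow> real \<Rightarrow> nat" where
  "grid_index a h m r = min (m - 1) (nat \<lfloor>(r - a) / h\<rfloor>)"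

lemma grid_index_eq:
  assumes "h > 0" "j < m" "a + real j * h \<le> r" "r < a + real (Suc j) * h"
  shows "grid_index a h m r = j"
proof -
  have "real j \<le> (r - a) / h" "(r - a) / h < real j + 1"
    using assms by (simp_all add: field_simps)
  then have "\<lfloor>(r - a) / h\<rfloor> = int j"
    by (simp add: floor_eq_iff)
  then show ?thesis
    using assms(2) by (simp add: grid_index_def)
qed

lemma grid_index_less:
  assumes "h > 0" "a \<le> r" "r < a + real j * h"
  shows "grid_index a h m r < j"
proof -
  have "0 \<le> (r - a) / h" "(r - a) / h < real j"
    using assms by (simp_all add: field_simps)
  then have "nat \<lfloor>(r - a) / h\<rfloor> < j"
    by linarith
  then show ?thesis
    by (simp add: grid_index_def)
qed

lemma grid_step_measurable_on:
  fixes c :: "nat \<Rightarrow> 'b::euclidean_space"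
  shows "(\<lambda>r. c (grid_index a h m r)) measurable_on {a..b}"
proof -
  have "(\<lambda>r::real. c (min (m - 1) (nat \<lfloor>(r - a) / h\<rfloor>))) \<in> borel_measurable borel"
    by measurable
  then have "(\<lambda>r::real. c (min (m - 1) (nat \<lfloor>(r - a) / h\<rfloor>)))
               \<in> borel_measurable (lebesgue_on {a..b})"
    by (intro measurable_restrict_space1 measurable_completion) simp
  then show ?thesis
    by (simp add: measurable_on_iff_borel_measurable grid_index_def)
qed

text \<open>A feedback law that is updated only at the grid points a + j h can be closed against a
  non-anticipative response: the value on the j-th cell depends only on the control before it.\<close>

lemma nonanticipative_feedback_control:
  fixes \<Phi> :: "(real \<Rightarrow> 'b::euclidean_space) \<Rightarrow> real \<Rightarrow> 'x" and sel :: "nat \<Rightarrow> 'x \<Rightarrow> 'b"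
  assumes h: "h > 0" "real m * h = b - a" and U: "U \<noteq> {}" and sel: "\<And>j p. sel j p \<in> U"
    and na: "\<And>u1 u2 s. u1 \<in> meas_maps U a b \<Longrightarrow> u2 \<in> meas_maps U a b \<Longrightarrow> s \<in> {a..b} \<Longrightarrow>
               (\<forall>r. a \<le> r \<and> r < s \<longrightarrow> u1 r = u2 r) \<Longrightarrow> \<Phi> u1 s = \<Phi> u2 s"
  obtains u where "u \<in> meas_maps U a b"
    and "\<And>j r. j < m \<Longrightarrow> a + real j * h \<le> r \<Longrightarrow> r < a + real (Suc j) * h \<Longrightarrow>
           u r = sel j (\<Phi> u (a + real j * h))"
proof -
  obtain c0 where c0: "c0 \<in> U" using U by blast
  define step where "step c = (\<lambda>r. c (grid_index a h m r))" for c :: "nat \<Rightarrow> 'b"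
  have step_meas: "step c \<in> meas_maps U a b" if "\<And>k. c k \<in> U" for c
    using that grid_step_measurable_on[of c] by (simp add: meas_maps_def step_def)
  \<comment> \<open>cs j fixes the values on the first j cells; cell j is then filled using the response
    to the control built so far.\<close>
  define cs where "cs = rec_nat (\<lambda>_. c0) (\<lambda>j c. c(j := sel j (\<Phi> (step c) (a + real j * h))))"
  have cs_Suc: "cs (Suc j) = (cs j)(j := sel j (\<Phi> (step (cs j)) (a + real j * h)))" for j
    by (simp add: cs_def)
  have cs_U: "cs j k \<in> U" for j k
    by (induction j) (auto simp: cs_def c0 sel)
  have cs_stable: "cs (j + i) k = cs j k" if "k < j" for i j k
    using that by (induction i) (auto simp: cs_Suc)
  define u where "u = step (cs m)"
  have u: "u \<in> meas_maps U a b"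
    unfolding u_def by (rule step_meas[OF cs_U])
  have "u r = sel j (\<Phi> u (a + real j * h))"
    if j: "j < m" and r: "a + real j * h \<le> r" "r < a + real (Suc j) * h" for j r
  proof -
    have grid: "a + real j * h \<in> {a..b}"
      using j h by (auto simp: algebra_simps intro!: mult_right_mono)
    have "\<Phi> (step (cs j)) (a + real j * h) = \<Phi> u (a + real j * h)"
    proof (rule na[OF step_meas[OF cs_U] u grid], intro allI impI)
      fix q assume "a \<le> q \<and> q < a + real j * h"
      then have "grid_index a h m q < j"
        using grid_index_less[OF h(1)] by blast
      then show "step (cs j) q = u q"
        using cs_stable[where i="m - j" and j=j and k="grid_index a h m q"] j
        by (simp add: u_def step_def)
    qed
    moreover have "u r = cs (Suc j) j"
      using grid_index_eq[OF h(1) j r] cs_stable[where i="m - Suc j" and j="Suc j" and k=j] j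
      by (simp add: u_def step_def)
    ultimately show ?thesis
      by (simp add: cs_Suc)
  qed
  with u show thesis by (rule that)
qed

lemma discrete_gronwall_linear:
  fixes x :: "nat \<Rightarrow> real"
  assumes "x 0 = 0" "q \<ge> 0" "d \<ge> 0" "\<And>j. j < m \<Longrightarrow> x (Suc j) \<le> (1 + q) * x j + d"
  shows "j \<le> m \<Longrightarrow> x j \<le> real j * d * (1 + q) ^ j"
proof (induction j)
  case 0
  then show ?case using assms(1) by simp
next
  case (Suc j)
  have "x j \<le> real j * d * (1 + q) ^ j"
    using Suc by simp
  then have "(1 + q) * x j + d \<le> (1 + q) * (real j * d * (1 + q) ^ j) + d"
    using assms(2) by simp
  then have "x (Suc j) \<le> (1 + q) * (real j * d * (1 + q) ^ j) + d"
    using assms(4)[of j] Suc.prems by simp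
  also have "\<dots> \<le> real (Suc j) * d * (1 + q) ^ Suc j"
  proof -
    have "d \<le> d * (1 + q) ^ Suc j"
      using assms(2,3) mult_left_mono[OF one_le_power[of "1 + q" "Suc j"], of d] by simp
    then show ?thesis
      by (simp add: algebra_simps)
  qed
  finally show ?case .
qed

lemma discrete_gronwall_exp:
  fixes x :: "nat \<Rightarrow> real"
  assumes "x 0 = 0" "K \<ge> 0" "h > 0" "d \<ge> 0" "real m * h = L"
    and "\<And>j. j < m \<Longrightarrow> x (Suc j) \<le> (1 + K * h) * x j + h * d"
  shows "x m \<le> L * exp (K * L) * d"
proof -
  have "x m \<le> real m * (h * d) * (1 + K * h) ^ m"
    using discrete_gronwall_linear[of x "K * h" "h * d" m m] assms by simp
  also have "\<dots> \<le> real m * (h * d) * exp (K * h) ^ m"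
    using assms(2-4) by (intro mult_left_mono power_mono) auto
  also have "\<dots> = (real m * h) * exp (K * (real m * h)) * d"
    by (simp add: exp_of_nat_mult[symmetric] mult_ac)
  finally show ?thesis
    by (simp only: assms(5))
qed

text \<open>w u models the deviation, under the control u and the opponent's non-anticipative reply,
  from a reference trajectory.\<close>

locale extremal_aiming =
  fixes a b :: real and A :: "real \<Rightarrow> real^'n^'n" and B :: "real \<Rightarrow> real^'m^'n"
    and U :: "(real^'m) set"
    and F :: "(real \<Rightarrow> real^'m) \<Rightarrow> real \<Rightarrow> real^'n"
    and w :: "(real \<Rightarrow> real^'m) \<Rightarrow> real \<Rightarrow> real^'n"
  assumes a_le_b: "a \<le> b"
    and A_cont: "continuous_on {a..b} A" and B_cont: "continuous_on {a..b} B"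
    and U_compact: "compact U" and U_nonempty: "U \<noteq> {}"
    and sol: "\<And>u. u \<in> meas_maps U a b \<Longrightarrow> lin_ode_sol A (F u) a b (w u)"
    and init: "\<And>u. u \<in> meas_maps U a b \<Longrightarrow> w u a = 0"
    and aim: "\<And>u r. u \<in> meas_maps U a b \<Longrightarrow> r \<in> {a..b} \<Longrightarrow> \<exists>c\<in>U. F u r = B r *v (u r - c)"
    and nonanticipative: "\<And>u1 u2 s. u1 \<in> meas_maps U a b \<Longrightarrow> u2 \<in> meas_maps U a b \<Longrightarrow>
          s \<in> {a..b} \<Longrightarrow> (\<forall>r. a \<le> r \<and> r < s \<longrightarrow> u1 r = u2 r) \<Longrightarrow> w u1 s = w u2 s"
begin

definition A_bound :: real where "A_bound = (SUP r\<in>{a..b}. norm (A r))"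
definition B_bound :: real where "B_bound = (SUP r\<in>{a..b}. norm (B r))"
definition U_radius :: real where "U_radius = (SUP c\<in>U. norm c)"
definition w_bound :: real where
  "w_bound = 2 * B_bound * U_radius * (b - a) * exp (A_bound * (b - a))"
definition w_speed :: real where "w_speed = A_bound * w_bound + 2 * B_bound * U_radius"

lemma norm_A_le: "r \<in> {a..b} \<Longrightarrow> norm (A r) \<le> A_bound"
  unfolding A_bound_def by (rule norm_le_SUP_norm[OF A_cont compact_Icc])

lemma norm_B_le: "r \<in> {a..b} \<Longrightarrow> norm (B r) \<le> B_bound"
  unfolding B_bound_def by (rule norm_le_SUP_norm[OF B_cont compact_Icc])

lemma norm_U_le: "c \<in> U \<Longrightarrow> norm c \<le> U_radius"
  unfolding U_radius_def by (rule norm_le_SUP_norm[OF continuous_on_id U_compact])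

lemma bounds_nonneg: "A_bound \<ge> 0" "B_bound \<ge> 0" "U_radius \<ge> 0" "w_bound \<ge> 0" "w_speed \<ge> 0"
proof -
  show A: "A_bound \<ge> 0" and B: "B_bound \<ge> 0"
    using norm_A_le[of a] norm_B_le[of a] a_le_b by (auto intro: order_trans[OF norm_ge_zero])
  obtain c where "c \<in> U" using U_nonempty by blast
  then show U: "U_radius \<ge> 0"
    using norm_U_le norm_ge_zero order_trans by blast
  show w: "w_bound \<ge> 0"
    using A B U a_le_b by (simp add: w_bound_def)
  show "w_speed \<ge> 0"
    using A B U w by (simp add: w_speed_def)
qed

lemma control_in_U: "u \<in> meas_maps U a b \<Longrightarrow> r \<in> {a..b} \<Longrightarrow> u r \<in> U"
  by (simp add: meas_maps_def)

lemma norm_diff_U_le: "c \<in> U \<Longrightarrow> c' \<in> U \<Longrightarrow> norm (c - c') \<le> 2 * U_radius"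
  using norm_triangle_ineq4[of c c'] norm_U_le[of c] norm_U_le[of c'] by simp

lemma norm_F_le:
  assumes u: "u \<in> meas_maps U a b" and r: "r \<in> {a..b}"
  shows "norm (F u r) \<le> 2 * B_bound * U_radius"
proof -
  obtain c where c: "c \<in> U" "F u r = B r *v (u r - c)"
    using aim[OF u r] by blast
  have "norm (B r) * norm (u r - c) \<le> B_bound * (2 * U_radius)"
    using norm_B_le[OF r] norm_diff_U_le[OF control_in_U[OF u r] c(1)] bounds_nonneg
    by (intro mult_mono) auto
  then show ?thesis
    using c(2) norm_matrix_vector_mult_le[of "B r" "u r - c"] by simp
qed

lemma norm_w_le:
  assumes "u \<in> meas_maps U a b" "s \<in> {a..b}"
  shows "norm (w u s) \<le> w_bound"
  using lin_ode_sol_norm_bound[OF sol init norm_A_le bounds_nonneg(1) norm_F_le] assms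
  by (simp add: w_bound_def)

lemma w_lipschitz:
  assumes "u \<in> meas_maps U a b" "a \<le> s1" "s1 \<le> s2" "s2 \<le> b"
  shows "norm (w u s2 - w u s1) \<le> w_speed * (s2 - s1)"
  using lin_ode_sol_lipschitz[OF sol norm_A_le bounds_nonneg(1) norm_F_le norm_w_le] assms
  by (simp add: w_speed_def)

lemma aiming_direction_exists: "\<exists>c\<in>U. \<forall>c'\<in>U. p \<bullet> (M *v c) \<le> p \<bullet> (M *v c')"
  by (intro continuous_attains_inf U_compact U_nonempty continuous_on_inner continuous_on_const
      bounded_linear.continuous_on[OF matrix_vector_mul_bounded_linear] continuous_on_id)

lemma inner_drift_le:
  assumes u: "u \<in> meas_maps U a b" and s: "a \<le> s" "s \<le> r" "r \<le> s + h" "s + h \<le> b"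
  shows "w u s \<bullet> (A r *v w u r) \<le> A_bound * (norm (w u s))\<^sup>2 + A_bound * w_bound * w_speed * h"
proof -
  define p where "p = w u s"
  have r: "r \<in> {a..b}" using s by auto
  have "norm (w u r - p) \<le> w_speed * (r - s)"
    unfolding p_def using s by (intro w_lipschitz[OF u]) auto
  also have "\<dots> \<le> w_speed * h"
    using s bounds_nonneg by (intro mult_left_mono) auto
  finally have "norm (w u r) \<le> norm p + w_speed * h"
    using norm_triangle_sub[of "w u r" p] by linarith
  then have "norm (A r *v w u r) \<le> A_bound * (norm p + w_speed * h)"
    using norm_matrix_vector_mult_le[of "A r" "w u r"] bounds_nonneg
      mult_mono[OF norm_A_le[OF r] _ _ norm_ge_zero] by (meson order_trans)
  then have "p \<bullet> (A r *v w u r) \<le> norm p * (A_bound * (norm p + w_speed * h))"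
    using norm_cauchy_schwarz[of p "A r *v w u r"] mult_left_mono[OF _ norm_ge_zero, of _ _ p]
    by (meson order_trans)
  also have "\<dots> \<le> A_bound * (norm p)\<^sup>2 + A_bound * w_bound * w_speed * h"
  proof -
    have "A_bound * (norm p * (w_speed * h)) \<le> A_bound * (w_bound * (w_speed * h))"
      using norm_w_le[OF u] s bounds_nonneg
      by (intro mult_left_mono mult_right_mono) (auto simp: p_def)
    then show ?thesis
      by (simp add: algebra_simps power2_eq_square)
  qed
  finally show ?thesis
    by (simp add: p_def)
qed

text \<open>Write F u r = B(r) (u r - c') with c' in U. Minimality of u r makes the B(s)-part point
  away from the deviation p at time s, so only the oscillation of B between s and r remains.\<close>

lemma inner_forcing_le:
  assumes u: "u \<in> meas_maps U a b" and s: "s \<in> {a..b}" and r: "r \<in> {a..b}"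
    and c: "\<And>c'. c' \<in> U \<Longrightarrow> w u s \<bullet> (B s *v u r) \<le> w u s \<bullet> (B s *v c')"
    and \<eta>: "norm (B r - B s) \<le> \<eta>"
  shows "w u s \<bullet> F u r \<le> 2 * w_bound * U_radius * \<eta>"
proof -
  define p where "p = w u s"
  obtain c' where c': "c' \<in> U" "F u r = B r *v (u r - c')"
    using aim[OF u r] by blast
  have "F u r = B s *v (u r - c') + (B r - B s) *v (u r - c')"
    using c'(2) by (simp add: matrix_vector_mult_diff_rdistrib)
  moreover have "p \<bullet> (B s *v (u r - c')) \<le> 0"
    using c[OF c'(1)] by (simp add: p_def matrix_vector_mult_diff_distrib inner_diff_right)
  moreover have "p \<bullet> ((B r - B s) *v (u r - c')) \<le> 2 * w_bound * U_radius * \<eta>"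
  proof -
    have "norm (B r - B s) * norm (u r - c') \<le> \<eta> * (2 * U_radius)"
      using \<eta> norm_diff_U_le[OF control_in_U[OF u r] c'(1)]
      by (intro mult_mono) (auto intro: order_trans[OF norm_ge_zero])
    then have "norm ((B r - B s) *v (u r - c')) \<le> \<eta> * (2 * U_radius)"
      using norm_matrix_vector_mult_le[of "B r - B s" "u r - c'"] by linarith
    then have "norm p * norm ((B r - B s) *v (u r - c')) \<le> w_bound * (\<eta> * (2 * U_radius))"
      using norm_w_le[OF u s]
      by (intro mult_mono) (auto simp: p_def intro: order_trans[OF norm_ge_zero])
    then show ?thesis
      using norm_cauchy_schwarz[of p "(B r - B s) *v (u r - c')"] by (simp add: mult_ac)
  qed
  ultimately show ?thesis
    by (simp add: p_def inner_add_right)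
qed

lemma aiming_step:
  assumes u: "u \<in> meas_maps U a b" and s: "a \<le> s" "s + h \<le> b" and h: "h \<ge> 0"
    and c: "\<And>r c'. s \<le> r \<Longrightarrow> r < s + h \<Longrightarrow> c' \<in> U \<Longrightarrow>
              w u s \<bullet> (B s *v u r) \<le> w u s \<bullet> (B s *v c')"
    and \<eta>: "\<And>r. s \<le> r \<Longrightarrow> r \<le> s + h \<Longrightarrow> norm (B r - B s) \<le> \<eta>"
  shows "(norm (w u (s + h)))\<^sup>2 \<le> (1 + 2 * A_bound * h) * (norm (w u s))\<^sup>2
           + h * ((2 * A_bound * w_bound * w_speed + w_speed\<^sup>2) * h + 4 * w_bound * U_radius * \<eta>)"
proof -
  define p where "p = w u s"
  define \<Delta> where "\<Delta> = w u (s + h) - p"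
  define \<beta> where
    "\<beta> = A_bound * (norm p)\<^sup>2 + A_bound * w_bound * w_speed * h + 2 * w_bound * U_radius * \<eta>"
  have "((\<lambda>r. A r *v w u r + F u r) has_integral \<Delta>) {s..s + h}"
    using lin_ode_solD[OF lin_ode_sol_subinterval[OF sol[OF u] s(1) _ s(2)], of "s + h"] h
    by (simp add: \<Delta>_def p_def)
  then have inner_int: "((\<lambda>r. p \<bullet> (A r *v w u r + F u r)) has_integral p \<bullet> \<Delta>) {s..s + h}"
    using has_integral_linear[OF _ bounded_linear_inner_right] by (auto simp: o_def)
  have spiked: "((\<lambda>r. if r = s + h then \<beta> else p \<bullet> (A r *v w u r + F u r)) has_integral p \<bullet> \<Delta>)
                  {s..s + h}"
    by (rule has_integral_spike_finite[where S="{s + h}", OF _ _ inner_int]) auto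
  have const: "((\<lambda>r. \<beta>) has_integral h * \<beta>) {s..s + h}"
    using has_integral_const_real[of \<beta> s "s + h"] h by simp
  have "p \<bullet> (A r *v w u r + F u r) \<le> \<beta>" if "r \<in> {s..s + h}" "r \<noteq> s + h" for r
    using inner_drift_le[OF u, of s r h] inner_forcing_le[OF u, of s r \<eta>] c[of r] \<eta>[of r] that s
    by (simp add: p_def \<beta>_def inner_add_right)
  then have inner_le: "p \<bullet> \<Delta> \<le> h * \<beta>"
    by (intro has_integral_le[OF spiked const]) auto
  have "norm \<Delta> \<le> w_speed * h"
    unfolding \<Delta>_def p_def using w_lipschitz[OF u s(1) _ s(2)] h by simp
  then have norm_le: "(norm \<Delta>)\<^sup>2 \<le> (w_speed * h)\<^sup>2"
    by (simp add: power_mono)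
  have "(norm (p + \<Delta>))\<^sup>2 = (norm p)\<^sup>2 + 2 * (p \<bullet> \<Delta>) + (norm \<Delta>)\<^sup>2"
    by (simp add: power2_norm_eq_inner inner_add_left inner_add_right inner_commute)
  then have "(norm (w u (s + h)))\<^sup>2 = (norm p)\<^sup>2 + 2 * (p \<bullet> \<Delta>) + (norm \<Delta>)\<^sup>2"
    by (simp add: \<Delta>_def)
  also have "\<dots> \<le> (norm p)\<^sup>2 + 2 * (h * \<beta>) + (w_speed * h)\<^sup>2"
    using inner_le norm_le by linarith
  also have "\<dots> = (1 + 2 * A_bound * h) * (norm p)\<^sup>2
                   + h * ((2 * A_bound * w_bound * w_speed + w_speed\<^sup>2) * h
                          + 4 * w_bound * U_radius * \<eta>)"
    by (simp add: \<beta>_def algebra_simps power2_eq_square)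
  finally show ?thesis
    by (simp add: p_def)
qed

lemma aiming_control_exists:
  assumes h: "h > 0" "real m * h = b - a"
  obtains u where "u \<in> meas_maps U a b"
    and "\<And>j r c'. j < m \<Longrightarrow> a + real j * h \<le> r \<Longrightarrow> r < a + real (Suc j) * h \<Longrightarrow> c' \<in> U \<Longrightarrow>
           w u (a + real j * h) \<bullet> (B (a + real j * h) *v u r)
             \<le> w u (a + real j * h) \<bullet> (B (a + real j * h) *v c')"
proof -
  define sel where
    "sel j p = (SOME c. c \<in> U \<and>
                  (\<forall>c'\<in>U. p \<bullet> (B (a + real j * h) *v c) \<le> p \<bullet> (B (a + real j * h) *v c')))"
    for j p
  have sel: "sel j p \<in> U \<and>
               (\<forall>c'\<in>U. p \<bullet> (B (a + real j * h) *v sel j p) \<le> p \<bullet> (B (a + real j * h) *v c'))"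
    for j p
    unfolding sel_def by (rule someI2_bex[OF aiming_direction_exists]) auto
  obtain u where u: "u \<in> meas_maps U a b"
    and u_sel: "\<And>j r. j < m \<Longrightarrow> a + real j * h \<le> r \<Longrightarrow> r < a + real (Suc j) * h \<Longrightarrow>
                  u r = sel j (w u (a + real j * h))"
    using nonanticipative_feedback_control[where \<Phi>=w, OF h U_nonempty _ nonanticipative] sel
    by blast
  show thesis
    by (rule that[OF u]) (use u_sel sel in simp)
qed

definition aiming_constant :: real where
  "aiming_constant = (b - a) * exp (2 * A_bound * (b - a))
     * (2 * A_bound * w_bound * w_speed + w_speed\<^sup>2 + 4 * w_bound * U_radius)"

lemma aiming_estimate:
  fixes m :: nat
  assumes m: "m > 0" and ab: "a < b" and h\<eta>: "(b - a) / m \<le> \<eta>"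
    and \<eta>: "\<And>r1 r2. r1 \<in> {a..b} \<Longrightarrow> r2 \<in> {a..b} \<Longrightarrow> \<bar>r1 - r2\<bar> \<le> (b - a) / m \<Longrightarrow>
              norm (B r1 - B r2) \<le> \<eta>"
  obtains u where "u \<in> meas_maps U a b" "(norm (w u b))\<^sup>2 \<le> aiming_constant * \<eta>"
proof -
  define h where "h = (b - a) / m"
  have h: "h > 0" "real m * h = b - a"
    using ab m by (auto simp: h_def)
  define X where
    "X = (2 * A_bound * w_bound * w_speed + w_speed\<^sup>2) * h + 4 * w_bound * U_radius * \<eta>"
  have P: "0 \<le> 2 * A_bound * w_bound * w_speed + w_speed\<^sup>2"
    using bounds_nonneg by simp
  have "0 \<le> \<eta>"
    using \<eta>[of a a] ab by simp
  then have X: "0 \<le> X"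
    "X \<le> (2 * A_bound * w_bound * w_speed + w_speed\<^sup>2 + 4 * w_bound * U_radius) * \<eta>"
    using bounds_nonneg h(1) P mult_left_mono[OF h\<eta>[folded h_def] P]
    by (simp_all add: X_def distrib_right)
  obtain u where u: "u \<in> meas_maps U a b"
    and aimed: "\<And>j r c'. j < m \<Longrightarrow> a + real j * h \<le> r \<Longrightarrow> r < a + real (Suc j) * h \<Longrightarrow> c' \<in> U \<Longrightarrow>
                  w u (a + real j * h) \<bullet> (B (a + real j * h) *v u r)
                    \<le> w u (a + real j * h) \<bullet> (B (a + real j * h) *v c')"
    using aiming_control_exists[OF h] by blast
  have step: "(norm (w u (a + real (Suc j) * h)))\<^sup>2
                \<le> (1 + 2 * A_bound * h) * (norm (w u (a + real j * h)))\<^sup>2 + h * X"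
    if j: "j < m" for j
  proof -
    have "real (Suc j) * h \<le> real m * h"
      using j h by (intro mult_right_mono) auto
    then have cell: "a \<le> a + real j * h" "(a + real j * h) + h \<le> b"
      using h by (auto simp: algebra_simps)
    have "(norm (w u ((a + real j * h) + h)))\<^sup>2
            \<le> (1 + 2 * A_bound * h) * (norm (w u (a + real j * h)))\<^sup>2 + h * X"
      unfolding X_def
    proof (rule aiming_step[OF u cell less_imp_le[OF h(1)]])
      fix r c' assume "a + real j * h \<le> r" "r < a + real j * h + h" "c' \<in> U"
      then show "w u (a + real j * h) \<bullet> (B (a + real j * h) *v u r)
                   \<le> w u (a + real j * h) \<bullet> (B (a + real j * h) *v c')"
        using aimed[OF j] by (simp add: algebra_simps)
    next
      fix r assume "a + real j * h \<le> r" "r \<le> a + real j * h + h"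
      then show "norm (B r - B (a + real j * h)) \<le> \<eta>"
        using cell by (intro \<eta>) (auto simp: h_def)
    qed
    then show ?thesis
      by (simp add: algebra_simps)
  qed
  have "(norm (w u (a + real m * h)))\<^sup>2 \<le> (b - a) * exp (2 * A_bound * (b - a)) * X"
    using discrete_gronwall_exp[where x="\<lambda>j. (norm (w u (a + real j * h)))\<^sup>2" and K="2 * A_bound",
        OF _ _ h(1) X(1) h(2) step] init[OF u] bounds_nonneg
    by simp
  also have "\<dots> \<le> aiming_constant * \<eta>"
    unfolding aiming_constant_def using X(2) ab by (simp add: mult.assoc mult_left_mono)
  finally show thesis
    using u h by (intro that[OF u]) simp
qed

lemma exists_control_close:
  assumes "\<epsilon> > 0"
  shows "\<exists>u\<in>meas_maps U a b. norm (w u b) \<le> \<epsilon>"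
proof (cases "a = b")
  case True
  obtain c where "c \<in> U" using U_nonempty by blast
  then have "(\<lambda>_. c) \<in> meas_maps U a b"
    by (simp add: meas_maps_def)
  then show ?thesis
    using init True assms by force
next
  case False
  then have ab: "a < b" using a_le_b by simp
  define \<eta> where "\<eta> = \<epsilon>\<^sup>2 / (aiming_constant + 1)"
  have C: "aiming_constant \<ge> 0"
    unfolding aiming_constant_def using ab bounds_nonneg by simp
  then have \<eta>: "\<eta> > 0" "aiming_constant * \<eta> \<le> \<epsilon>\<^sup>2"
    using assms by (auto simp: \<eta>_def field_simps)
  obtain \<delta> where \<delta>: "\<delta> > 0"
    and B_close: "\<And>r1 r2. r1 \<in> {a..b} \<Longrightarrow> r2 \<in> {a..b} \<Longrightarrow> dist r1 r2 < \<delta> \<Longrightarrow> dist (B r1) (B r2) < \<eta>"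
    using compact_uniformly_continuous[OF B_cont compact_Icc] \<eta>(1)
    unfolding uniformly_continuous_on_def by metis
  obtain m :: nat where m: "b - a < real m * min \<delta> \<eta>"
    using ex_less_of_nat_mult[of "min \<delta> \<eta>" "b - a"] \<delta> \<eta> by auto
  then have m_pos: "m > 0"
    using ab \<delta> \<eta> by (cases m) auto
  then have h: "(b - a) / m < min \<delta> \<eta>"
    using m by (metis pos_divide_less_eq mult.commute of_nat_0_less_iff)
  obtain u where u: "u \<in> meas_maps U a b" and "(norm (w u b))\<^sup>2 \<le> aiming_constant * \<eta>"
  proof (rule aiming_estimate[OF m_pos ab])
    show "(b - a) / m \<le> \<eta>"
      using h by simp
    fix r1 r2 assume "r1 \<in> {a..b}" "r2 \<in> {a..b}" "\<bar>r1 - r2\<bar> \<le> (b - a) / m"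
    then show "norm (B r1 - B r2) \<le> \<eta>"
      using B_close[of r1 r2] h by (simp add: dist_norm)
  qed
  then have "(norm (w u b))\<^sup>2 \<le> \<epsilon>\<^sup>2"
    using \<eta>(2) by linarith
  then show ?thesis
    using u assms by (auto intro: power2_le_imp_le)
qed

end

section \<open>The linear differential game\<close>

lemma convex_mink_diff:
  fixes Y :: "'a::real_vector set"
  assumes "convex Y"
  shows "convex (mink_diff Y Z)"
proof (rule convexI)
  fix c1 c2 and p q :: real
  assume c: "c1 \<in> mink_diff Y Z" "c2 \<in> mink_diff Y Z" and pq: "0 \<le> p" "0 \<le> q" "p + q = 1"
  have "p *\<^sub>R c1 + q *\<^sub>R c2 + z \<in> Y" if "z \<in> Z" for z
  proof -
    have "p *\<^sub>R (c1 + z) + q *\<^sub>R (c2 + z) \<in> Y"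
      using c that pq by (intro convexD[OF assms]) (auto simp: mink_diff_def)
    moreover have "p *\<^sub>R (c1 + z) + q *\<^sub>R (c2 + z) = p *\<^sub>R c1 + q *\<^sub>R c2 + (p + q) *\<^sub>R z"
      by (simp add: algebra_simps)
    ultimately show ?thesis
      using pq by simp
  qed
  then show "p *\<^sub>R c1 + q *\<^sub>R c2 \<in> mink_diff Y Z"
    by (auto simp: mink_diff_def)
qed

lemma convex_Wset: "convex U \<Longrightarrow> convex (Wset B E U D r)"
  unfolding Wset_def by (intro convex_mink_diff convex_linear_image matrix_vector_mul_linear)

lemma Wset_aim:
  assumes "\<omega> \<in> Wset B E U D r" "d \<in> D"
  obtains c where "c \<in> U" "B r *v c = \<omega> - E r *v d"
  using assms by (force simp: Wset_def mink_diff_def)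

lemma in_convex_hull_finite_image:
  fixes f :: "'i \<Rightarrow> 'a::real_vector"
  assumes "finite I" "x \<in> convex hull (f ` I)"
  obtains \<mu> where "\<And>i. i \<in> I \<Longrightarrow> \<mu> i \<ge> 0" "sum \<mu> I = 1" "(\<Sum>i\<in>I. \<mu> i *\<^sub>R f i) = x"
proof -
  define S where "S = {y. \<exists>\<mu>. (\<forall>i\<in>I. \<mu> i \<ge> 0) \<and> sum \<mu> I = 1 \<and> (\<Sum>i\<in>I. \<mu> i *\<^sub>R f i) = y}"
  have "f ` I \<subseteq> S"
  proof
    fix y assume "y \<in> f ` I"
    then obtain j where j: "j \<in> I" "y = f j" by blast
    have "(\<Sum>i\<in>I. (if i = j then 1 else 0) *\<^sub>R f i) = (\<Sum>i\<in>I. if i = j then f i else 0)"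
      by (rule sum.cong) auto
    then show "y \<in> S"
      unfolding S_def using j assms(1)
      by (intro CollectI exI[of _ "\<lambda>i. if i = j then 1 else 0"]) (simp add: sum.delta')
  qed
  moreover have "convex S"
  proof (rule convexI)
    fix y z and p q :: real
    assume "y \<in> S" "z \<in> S" and pq: "0 \<le> p" "0 \<le> q" "p + q = 1"
    then obtain \<mu> \<nu> where \<mu>: "\<forall>i\<in>I. \<mu> i \<ge> 0" "sum \<mu> I = 1" "(\<Sum>i\<in>I. \<mu> i *\<^sub>R f i) = y"
      and \<nu>: "\<forall>i\<in>I. \<nu> i \<ge> 0" "sum \<nu> I = 1" "(\<Sum>i\<in>I. \<nu> i *\<^sub>R f i) = z"
      by (auto simp: S_def)
    show "p *\<^sub>R y + q *\<^sub>R z \<in> S"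
      unfolding S_def
    proof (intro CollectI exI[of _ "\<lambda>i. p * \<mu> i + q * \<nu> i"] conjI)
      show "\<forall>i\<in>I. 0 \<le> p * \<mu> i + q * \<nu> i"
        using \<mu> \<nu> pq by auto
      show "(\<Sum>i\<in>I. p * \<mu> i + q * \<nu> i) = 1"
        using \<mu> \<nu> pq by (simp add: sum.distrib flip: sum_distrib_left)
      show "(\<Sum>i\<in>I. (p * \<mu> i + q * \<nu> i) *\<^sub>R f i) = p *\<^sub>R y + q *\<^sub>R z"
        using \<mu>(3) \<nu>(3) by (auto simp: scaleR_add_left sum.distrib scaleR_sum_right)
    qed
  qed
  ultimately have "convex hull (f ` I) \<subseteq> S"
    by (rule hull_minimal)
  then show thesis
    using assms(2) that by (auto simp: S_def)
qed

lemma is_traj_iff_lin_ode_sol: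
  "is_traj A B E T t x u d \<xi> \<longleftrightarrow>
     \<xi> t = x \<and> lin_ode_sol A (\<lambda>r. B r *v u r + E r *v d r) t T \<xi>"
  by (auto simp: is_traj_def lin_ode_sol_def add.assoc)

lemma end_state_eq:
  assumes "t \<le> T" "continuous_on {t..T} A" "is_traj A B E T t x u d \<xi>"
  shows "end_state A B E T t x u d = \<xi> T"
  unfolding end_state_def
proof (rule the_equality)
  show "\<exists>\<zeta>. is_traj A B E T t x u d \<zeta> \<and> \<zeta> T = \<xi> T"
    using assms(3) by blast
  fix y assume "\<exists>\<zeta>. is_traj A B E T t x u d \<zeta> \<and> \<zeta> T = y"
  then obtain \<zeta> where "is_traj A B E T t x u d \<zeta>" "\<zeta> T = y" by blast
  then show "y = \<xi> T"
    using lin_ode_sol_unique[OF assms(2)] assms(1,3) by (auto simp: is_traj_iff_lin_ode_sol)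
qed

lemma integrable_matrix_vector_mult_meas_maps:
  fixes M :: "real \<Rightarrow> real^'m^'n"
  assumes M: "continuous_on {a..b} M" and S: "compact S" and u: "u \<in> meas_maps S a b"
  shows "(\<lambda>r. M r *v u r) integrable_on {a..b}"
proof -
  obtain KM where KM: "\<And>r. r \<in> {a..b} \<Longrightarrow> norm (M r) \<le> KM"
    using continuous_on_compact_norm_bound[OF M compact_Icc] by blast
  obtain R where R: "\<And>c. c \<in> S \<Longrightarrow> norm c \<le> R"
    using compact_imp_bounded[OF S] by (auto simp: bounded_iff)
  have uS: "\<And>r. r \<in> {a..b} \<Longrightarrow> u r \<in> S" and um: "u measurable_on {a..b}"
    using u by (simp_all add: meas_maps_def)
  have "M \<in> borel_measurable (lebesgue_on {a..b})"
    by (rule continuous_imp_measurable_on_sets_lebesgue[OF M]) simp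
  then have "M measurable_on {a..b}"
    by (simp add: measurable_on_iff_borel_measurable)
  then have "(\<lambda>r. M r *v u r) measurable_on {a..b}"
    by (rule measurable_on_bilinear[OF bilinear_conv_bounded_bilinear[THEN iffD2,
          OF bounded_bilinear_matrix_vector_mult] _ um])
  then have "(\<lambda>r. M r *v u r) \<in> borel_measurable (lebesgue_on {a..b})"
    by (simp add: measurable_on_iff_borel_measurable)
  then show ?thesis
  proof (rule measurable_bounded_by_integrable_imp_integrable)
    show "(\<lambda>r. KM * R) integrable_on {a..b}"
      by (rule integrable_const_ivl)
    fix r assume r: "r \<in> {a..b}"
    have "norm (M r *v u r) \<le> norm (M r) * norm (u r)"
      by (rule norm_matrix_vector_mult_le)
    also have "\<dots> \<le> KM * R"
      using KM[OF r] R[OF uS[OF r]] by (intro mult_mono) (auto intro: order_trans[OF norm_ge_zero])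
    finally show "norm (M r *v u r) \<le> KM * R" .
  qed simp
qed

lemma lin_ode_sol_eq_if_forcing_ae_eq:
  assumes A: "continuous_on {a..b} A"
    and sol: "lin_ode_sol A f a b \<xi>" "lin_ode_sol A g a b \<zeta>" and init: "\<xi> a = \<zeta> a"
    and N: "negligible N" "\<And>r. r \<in> {a..b} - N \<Longrightarrow> f r = g r"
    and s: "s \<in> {a..b}"
  shows "\<xi> s = \<zeta> s"
proof (rule lin_ode_sol_unique[where f=f and \<zeta>=\<zeta>, OF A sol(1) _ init s])
  show "lin_ode_sol A f a b \<zeta>"
    unfolding lin_ode_sol_def
  proof
    fix q assume "q \<in> {a..b}"
    then show "((\<lambda>r. A r *v \<zeta> r + f r) has_integral \<zeta> q - \<zeta> a) {a..q}"
      by (intro has_integral_spike[OF N(1) _ lin_ode_solD[OF sol(2)]]) (auto simp: N(2))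
  qed
qed

lemma strategy_agrees_ae:
  assumes \<delta>: "\<delta> \<in> strategies U D t T"
    and u: "u1 \<in> meas_maps U t T" "u2 \<in> meas_maps U t T" and s: "s \<in> {t..T}"
    and eq: "\<And>r. t \<le> r \<Longrightarrow> r < s \<Longrightarrow> u1 r = u2 r"
  obtains N where "negligible N" "\<And>r. r \<in> {t..s} - N \<Longrightarrow> u1 r = u2 r \<and> \<delta> u1 r = \<delta> u2 r"
proof -
  have "{r \<in> space lebesgue. \<not> (r \<in> {t..s} \<longrightarrow> u1 r = u2 r)} \<subseteq> {s}"
    using eq by (auto simp: le_less)
  then have "AE r in lebesgue. r \<in> {t..s} \<longrightarrow> u1 r = u2 r"
    by (rule AE_I'[rotated]) (simp add: negligible_iff_null_sets[symmetric])
  then have "AE r in lebesgue. r \<in> {t..s} \<longrightarrow> \<delta> u1 r = \<delta> u2 r"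
    using \<delta> u s by (auto simp: strategies_def)
  then obtain N where N: "{r \<in> space lebesgue. \<not> (r \<in> {t..s} \<longrightarrow> \<delta> u1 r = \<delta> u2 r)} \<subseteq> N"
    "N \<in> null_sets lebesgue"
    by (auto elim!: AE_E simp: null_sets_def)
  show thesis
  proof (rule that[of "N \<union> {s}"])
    show "negligible (N \<union> {s})"
      using N(2) by (simp add: negligible_iff_null_sets[symmetric])
    fix r assume "r \<in> {t..s} - (N \<union> {s})"
    then show "u1 r = u2 r \<and> \<delta> u1 r = \<delta> u2 r"
      using N(1) eq by auto
  qed
qed

locale linear_game =
  fixes A :: "real \<Rightarrow> real^'n^'n" and B :: "real \<Rightarrow> real^'m^'n" and E :: "real \<Rightarrow> real^'l^'n"
    and U :: "(real^'m) set" and D :: "(real^'l) set" and T :: real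
  assumes A_cont: "continuous_on {0..T} A" and B_cont: "continuous_on {0..T} B"
    and E_cont: "continuous_on {0..T} E"
    and U_compact: "compact U" and U_nonempty: "U \<noteq> {}"
    and D_compact: "compact D" and D_nonempty: "D \<noteq> {}"
begin

lemma continuous_on_coefficients:
  assumes "t \<in> {0..T}"
  shows "continuous_on {t..T} A" "continuous_on {t..T} B" "continuous_on {t..T} E"
  using A_cont B_cont E_cont assms by (auto intro: continuous_on_subset)

definition response_traj ::
  "((real \<Rightarrow> real^'m) \<Rightarrow> real \<Rightarrow> real^'l) \<Rightarrow> real \<Rightarrow> real^'n \<Rightarrow> (real \<Rightarrow> real^'m) \<Rightarrow> real \<Rightarrow> real^'n"
  where "response_traj \<delta> t x u = (SOME \<xi>. is_traj A B E T t x u (\<delta> u) \<xi>)"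

lemma response_traj:
  assumes t: "t \<in> {0..T}" and \<delta>: "\<delta> \<in> strategies U D t T" and u: "u \<in> meas_maps U t T"
  shows "is_traj A B E T t x u (\<delta> u) (response_traj \<delta> t x u)"
proof -
  have "\<delta> u \<in> meas_maps D t T"
    using \<delta> u by (simp add: strategies_def)
  then have "(\<lambda>r. B r *v u r + E r *v \<delta> u r) integrable_on {t..T}"
    by (intro integrable_add
        integrable_matrix_vector_mult_meas_maps[OF continuous_on_coefficients(2)[OF t] U_compact u]
        integrable_matrix_vector_mult_meas_maps[OF continuous_on_coefficients(3)[OF t] D_compact])
  moreover have "t \<le> T"
    using t by simp
  ultimately obtain \<xi> where "\<xi> t = x" "lin_ode_sol A (\<lambda>r. B r *v u r + E r *v \<delta> u r) t T \<xi>"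
    using lin_ode_sol_exists[OF _ continuous_on_coefficients(1)[OF t]] by blast
  then have "is_traj A B E T t x u (\<delta> u) \<xi>"
    by (simp add: is_traj_iff_lin_ode_sol)
  then show ?thesis
    unfolding response_traj_def by (rule someI[where P="is_traj A B E T t x u (\<delta> u)"])
qed

lemma response_traj_nonanticipative:
  assumes t: "t \<in> {0..T}" and \<delta>: "\<delta> \<in> strategies U D t T"
    and u: "u1 \<in> meas_maps U t T" "u2 \<in> meas_maps U t T" and s: "s \<in> {t..T}"
    and eq: "\<And>r. t \<le> r \<Longrightarrow> r < s \<Longrightarrow> u1 r = u2 r"
  shows "response_traj \<delta> t x u1 s = response_traj \<delta> t x u2 s"
proof -
  obtain N where N: "negligible N" "\<And>r. r \<in> {t..s} - N \<Longrightarrow> u1 r = u2 r \<and> \<delta> u1 r = \<delta> u2 r"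
    using strategy_agrees_ae[OF \<delta> u s eq] by blast
  have ts: "t \<le> s" "s \<le> T" using s by auto
  have sol: "lin_ode_sol A (\<lambda>r. B r *v ui r + E r *v \<delta> ui r) t s (response_traj \<delta> t x ui)"
    and init: "response_traj \<delta> t x ui t = x" if "ui \<in> meas_maps U t T" for ui
    using response_traj[OF t \<delta> that] lin_ode_sol_subinterval[OF _ order_refl ts]
    by (auto simp: is_traj_iff_lin_ode_sol)
  have "continuous_on {t..s} A"
    using continuous_on_subset[OF continuous_on_coefficients(1)[OF t]] ts by auto
  then show ?thesis
  proof (rule lin_ode_sol_eq_if_forcing_ae_eq[OF _ sol[OF u(1)] sol[OF u(2)] _ N(1)])
    fix r assume "r \<in> {t..s} - N"
    then show "B r *v u1 r + E r *v \<delta> u1 r = B r *v u2 r + E r *v \<delta> u2 r"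
      using N(2) by simp
  qed (simp_all add: init[OF u(1)] init[OF u(2)] ts)
qed

lemma extremal_aiming_response:
  assumes t: "t \<in> {0..T}" and \<delta>: "\<delta> \<in> strategies U D t T"
    and \<omega>: "\<And>r. r \<in> {t..T} \<Longrightarrow> \<omega> r \<in> Wset B E U D r" and \<xi>: "lin_ode_sol A \<omega> t T \<xi>"
    and y: "lin_ode_sol A (\<lambda>_. 0) t T y" "y t = x - \<xi> t"
  shows "extremal_aiming t T A B U (\<lambda>u r. B r *v u r + E r *v \<delta> u r - \<omega> r)
           (\<lambda>u s. response_traj \<delta> t x u s - \<xi> s - y s)"
proof (unfold_locales)
  show "t \<le> T" "continuous_on {t..T} A" "continuous_on {t..T} B" "compact U" "U \<noteq> {}"
    using t continuous_on_coefficients[OF t] U_compact U_nonempty by auto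
next
  fix u assume u: "u \<in> meas_maps U t T"
  then have traj: "response_traj \<delta> t x u t = x"
    "lin_ode_sol A (\<lambda>r. B r *v u r + E r *v \<delta> u r) t T (response_traj \<delta> t x u)"
    using response_traj[OF t \<delta>] by (simp_all add: is_traj_iff_lin_ode_sol)
  have "lin_ode_sol A (\<lambda>r. (B r *v u r + E r *v \<delta> u r - \<omega> r) - 0) t T
          (\<lambda>s. (response_traj \<delta> t x u s - \<xi> s) - y s)"
    by (rule lin_ode_sol_diff[OF lin_ode_sol_diff[OF traj(2) \<xi>] y(1)])
  then show "lin_ode_sol A (\<lambda>r. B r *v u r + E r *v \<delta> u r - \<omega> r) t T
               (\<lambda>s. response_traj \<delta> t x u s - \<xi> s - y s)"
    by (simp only: diff_zero)
  show "response_traj \<delta> t x u t - \<xi> t - y t = 0"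
    using traj(1) y(2) by simp
next
  fix u r assume u: "u \<in> meas_maps U t T" and r: "r \<in> {t..T}"
  have "\<delta> u r \<in> D"
    using \<delta> u r by (simp add: strategies_def meas_maps_def)
  then obtain c where c: "c \<in> U" "B r *v c = \<omega> r - E r *v \<delta> u r"
    by (rule Wset_aim[OF \<omega>[OF r]])
  have "B r *v (u r - c) = B r *v u r - (\<omega> r - E r *v \<delta> u r)"
    using c(2) by (simp add: matrix_vector_mult_diff_distrib)
  then have "B r *v u r + E r *v \<delta> u r - \<omega> r = B r *v (u r - c)"
    by (simp add: diff_diff_eq2)
  with c(1) show "\<exists>c\<in>U. B r *v u r + E r *v \<delta> u r - \<omega> r = B r *v (u r - c)"
    by blast
next
  fix u1 u2 s
  assume u: "u1 \<in> meas_maps U t T" "u2 \<in> meas_maps U t T" and s: "s \<in> {t..T}"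
    and eq: "\<forall>r. t \<le> r \<and> r < s \<longrightarrow> u1 r = u2 r"
  have "response_traj \<delta> t x u1 s = response_traj \<delta> t x u2 s"
    by (rule response_traj_nonanticipative[OF t \<delta> u s]) (use eq in blast)
  then show "response_traj \<delta> t x u1 s - \<xi> s - y s = response_traj \<delta> t x u2 s - \<xi> s - y s"
    by simp
qed

lemma INF_end_state_le_reference:
  fixes g :: "real^'n \<Rightarrow> real"
  assumes t: "t \<in> {0..T}" and Lg: "Lg-lipschitz_on UNIV g" "Lg \<ge> 0"
    and \<delta>: "\<delta> \<in> strategies U D t T"
    and \<omega>: "\<And>r. r \<in> {t..T} \<Longrightarrow> \<omega> r \<in> Wset B E U D r" and \<xi>: "lin_ode_sol A \<omega> t T \<xi>"
    and y: "lin_ode_sol A (\<lambda>_. 0) t T y" "y t = x - \<xi> t"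
  shows "(INF u\<in>meas_maps U t T. g (end_state A B E T t x u (\<delta> u))) \<le> g (\<xi> T + y T)"
proof -
  define w where "w u s = response_traj \<delta> t x u s - \<xi> s - y s" for u s
  interpret aiming: extremal_aiming t T A B U "\<lambda>u r. B r *v u r + E r *v \<delta> u r - \<omega> r" w
    unfolding w_def[abs_def] by (rule extremal_aiming_response[OF t \<delta> \<omega> \<xi> y])
  have g_close: "\<bar>g (end_state A B E T t x u (\<delta> u)) - g (\<xi> T + y T)\<bar> \<le> Lg * norm (w u T)"
    if u: "u \<in> meas_maps U t T" for u
  proof -
    have "end_state A B E T t x u (\<delta> u) = (\<xi> T + y T) + w u T"
      using end_state_eq[OF _ continuous_on_coefficients(1)[OF t] response_traj[OF t \<delta> u]] t
      by (simp add: w_def)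
    then show ?thesis
      using lipschitz_onD[OF Lg(1), of "(\<xi> T + y T) + w u T" "\<xi> T + y T"]
      by (simp add: dist_norm dist_real_def)
  qed
  have bdd: "bdd_below ((\<lambda>u. g (end_state A B E T t x u (\<delta> u))) ` meas_maps U t T)"
  proof (rule bdd_belowI2)
    fix u assume u: "u \<in> meas_maps U t T"
    have "Lg * norm (w u T) \<le> Lg * aiming.w_bound"
      using aiming.norm_w_le[OF u] t Lg(2) by (intro mult_left_mono) auto
    then show "g (\<xi> T + y T) - Lg * aiming.w_bound \<le> g (end_state A B E T t x u (\<delta> u))"
      using g_close[OF u] by linarith
  qed
  show ?thesis
  proof (rule field_le_epsilon)
    fix e :: real assume e: "e > 0"
    obtain u where u: "u \<in> meas_maps U t T" and wT: "norm (w u T) \<le> e / (Lg + 1)"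
      using aiming.exists_control_close[of "e / (Lg + 1)"] e Lg(2) by auto
    have "Lg * norm (w u T) \<le> Lg * (e / (Lg + 1))"
      using wT Lg(2) by (rule mult_left_mono)
    also have "\<dots> \<le> e"
      using e Lg(2) by (simp add: field_simps)
    finally have "g (end_state A B E T t x u (\<delta> u)) \<le> g (\<xi> T + y T) + e"
      using g_close[OF u] by linarith
    then show "(INF u\<in>meas_maps U t T. g (end_state A B E T t x u (\<delta> u))) \<le> g (\<xi> T + y T) + e"
      using cINF_lower2[OF bdd u] by simp
  qed
qed

lemma value_fun_le_reference:
  fixes g :: "real^'n \<Rightarrow> real"
  assumes t: "t \<in> {0..T}" and Lg: "Lg-lipschitz_on UNIV g" "Lg \<ge> 0"
    and \<omega>: "\<And>r. r \<in> {t..T} \<Longrightarrow> \<omega> r \<in> Wset B E U D r" and \<xi>: "lin_ode_sol A \<omega> t T \<xi>"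
  shows "value_fun A B E U D g T t x \<le> g (\<xi> T + state_trans A T T t *v (x - \<xi> t))"
proof -
  obtain Y where Yt: "Y t = mat 1"
    and dY: "\<And>r. r \<in> {0..T} \<Longrightarrow> (Y has_vector_derivative A r ** Y r) (at r within {0..T})"
    using fundamental_matrix_exists[OF A_cont t] by blast
  have \<Phi>: "state_trans A T T t = Y T"
    using state_trans_eq[OF A_cont t _ Yt dY] t by simp
  have y: "lin_ode_sol A (\<lambda>_. 0) t T (\<lambda>s. Y s *v (x - \<xi> t))"
    by (rule fundamental_matrix_lin_ode_sol[OF t dY])
  obtain d where "d \<in> D"
    using D_nonempty by blast
  then have "(\<lambda>u _. d) \<in> strategies U D t T"
    by (simp add: strategies_def meas_maps_def)
  then have "value_fun A B E U D g T t x \<le> g (\<xi> T + Y T *v (x - \<xi> t))"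
    unfolding value_fun_def
    by (intro cSUP_least INF_end_state_le_reference[OF t Lg _ \<omega> \<xi> y]) (auto simp: Yt)
  then show ?thesis
    by (simp add: \<Phi>)
qed

lemma value_fun_le_convex_reference:
  fixes g :: "real^'n \<Rightarrow> real" and \<xi>s \<omega> :: "'i \<Rightarrow> real \<Rightarrow> real^'n" and xbar :: "'i \<Rightarrow> real^'n"
  assumes t: "t \<in> {0..T}" and Lg: "Lg-lipschitz_on UNIV g" "Lg \<ge> 0"
    and U_convex: "convex U" and g_convex: "convex_on UNIV g"
    and I: "finite I" and level: "\<And>i. i \<in> I \<Longrightarrow> g (xbar i) \<le> \<gamma>"
    and \<omega>: "\<And>i r. i \<in> I \<Longrightarrow> r \<in> {0..T} \<Longrightarrow> \<omega> i r \<in> Wset B E U D r"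
    and \<xi>s: "\<And>i s. i \<in> I \<Longrightarrow> s \<in> {0..T} \<Longrightarrow>
              ((\<lambda>r. A r *v \<xi>s i r + \<omega> i r) has_integral xbar i - \<xi>s i s) {s..T}"
    and \<xi>0: "\<xi>0 \<in> convex hull ((\<lambda>i. \<xi>s i t) ` I)"
  shows "value_fun A B E U D g T t x \<le> Lg * norm (state_trans A T T t *v (x - \<xi>0)) + \<gamma>"
proof -
  obtain \<mu> where \<mu>: "\<And>i. i \<in> I \<Longrightarrow> \<mu> i \<ge> 0" "sum \<mu> I = 1" "(\<Sum>i\<in>I. \<mu> i *\<^sub>R \<xi>s i t) = \<xi>0"
    using in_convex_hull_finite_image[OF I \<xi>0] by blast
  have I_ne: "I \<noteq> {}"
    using \<mu>(2) by auto
  have tT: "0 \<le> t" "t \<le> T"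
    using t by auto
  have sol_i: "lin_ode_sol A (\<omega> i) t T (\<xi>s i)" and end_i: "\<xi>s i T = xbar i" if i: "i \<in> I" for i
  proof -
    have "lin_ode_sol A (\<omega> i) 0 T (\<xi>s i)" "\<xi>s i T = xbar i"
      using lin_ode_sol_of_terminal[of 0 T A "\<xi>s i" "\<omega> i" "xbar i"] \<xi>s[OF i] tT by auto
    then show "lin_ode_sol A (\<omega> i) t T (\<xi>s i)" "\<xi>s i T = xbar i"
      using lin_ode_sol_subinterval[of A "\<omega> i" 0 T "\<xi>s i" t T] tT by auto
  qed
  define \<xi> where "\<xi> s = (\<Sum>i\<in>I. \<mu> i *\<^sub>R \<xi>s i s)" for s
  define \<omega>' where "\<omega>' r = (\<Sum>i\<in>I. \<mu> i *\<^sub>R \<omega> i r)" for r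
  have sol: "lin_ode_sol A \<omega>' t T \<xi>"
    unfolding \<xi>_def[abs_def] \<omega>'_def[abs_def] by (rule lin_ode_sol_sum[OF I sol_i])
  have W: "\<omega>' r \<in> Wset B E U D r" if "r \<in> {t..T}" for r
    unfolding \<omega>'_def using that tT \<mu>(1,2)
    by (intro convex_sum[OF I convex_Wset[OF U_convex]] \<omega>) auto
  have "g (\<xi> T) \<le> (\<Sum>i\<in>I. \<mu> i * g (xbar i))"
    unfolding \<xi>_def using end_i \<mu>(1,2) by (simp add: convex_on_sum[OF I I_ne g_convex])
  also have "\<dots> \<le> (\<Sum>i\<in>I. \<mu> i * \<gamma>)"
    using level \<mu>(1) by (intro sum_mono mult_left_mono) auto
  also have "\<dots> = \<gamma>"
    using \<mu>(2) by (simp add: sum_distrib_right[symmetric])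
  finally have g_end: "g (\<xi> T) \<le> \<gamma>" .
  have "value_fun A B E U D g T t x \<le> g (\<xi> T + state_trans A T T t *v (x - \<xi>0))"
    using value_fun_le_reference[OF t Lg W sol] \<mu>(3) by (simp add: \<xi>_def)
  also have "\<dots> \<le> g (\<xi> T) + Lg * norm (state_trans A T T t *v (x - \<xi>0))"
    using lipschitz_onD[OF Lg(1), of "\<xi> T + state_trans A T T t *v (x - \<xi>0)" "\<xi> T"]
    by (simp add: dist_norm dist_real_def)
  finally show ?thesis
    using g_end by simp
qed

end

lemma le_mult_INF_plus:
  fixes f :: "'a \<Rightarrow> real"
  assumes "S \<noteq> {}" "c \<ge> 0" "\<And>s. s \<in> S \<Longrightarrow> v \<le> c * f s + d"
  shows "v \<le> c * (INF s\<in>S. f s) + d"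
proof (cases "c = 0")
  case True
  then show ?thesis
    using assms(1,3) by force
next
  case False
  then have c: "c > 0"
    using assms(2) by simp
  have "(v - d) / c \<le> f s" if "s \<in> S" for s
    using assms(3)[OF that] c by (simp add: pos_divide_le_eq mult.commute)
  then have "(v - d) / c \<le> (INF s\<in>S. f s)"
    by (rule cINF_greatest[OF assms(1)])
  then show ?thesis
    using c by (simp add: pos_divide_le_eq mult.commute)
qed

theorem theorem3:
  fixes T :: real
    and A :: "real \<Rightarrow> real^'n^'n" and B :: "real \<Rightarrow> real^'m^'n" and E :: "real \<Rightarrow> real^'l^'n"
    and U :: "(real^'m) set" and D :: "(real^'l) set"
    and g :: "real^'n \<Rightarrow> real" and Lg :: real
    and N :: nat and \<gamma> :: "nat \<Rightarrow> real" and nk :: "nat \<Rightarrow> nat"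
    and xbar :: "nat \<Rightarrow> nat \<Rightarrow> real^'n"
    and \<omega> :: "nat \<Rightarrow> nat \<Rightarrow> real \<Rightarrow> real^'n"
    and \<xi>s :: "nat \<Rightarrow> nat \<Rightarrow> real \<Rightarrow> real^'n"
    and t :: real and x :: "real^'n"
  assumes "T > 0"
    and "continuous_on {0..T} A" and "continuous_on {0..T} B" and "continuous_on {0..T} E"
    and "compact U" and "convex U" and "U \<noteq> {}"
    and "compact D" and "convex D" and "D \<noteq> {}"
    and "continuous_on UNIV g"
    and "convex_on UNIV g"
    and "Lg \<ge> 0" and "Lg-lipschitz_on UNIV g"
    and "\<forall>s\<in>{0..T}. Wset B E U D s \<noteq> {}"
    and "N \<ge> 1"
    and "\<forall>k\<in>{1..N}. \<gamma> k \<in> range g"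
    and "\<forall>k\<in>{1..N}. nk k \<ge> 1"
    and "\<forall>k\<in>{1..N}. \<forall>i\<in>{1..nk k}. g (xbar i k) = \<gamma> k"
    and "\<forall>k\<in>{1..N}. \<forall>i\<in>{1..nk k}. \<omega> i k measurable_on {0..T} \<and>
            (\<forall>s\<in>{0..T}. \<omega> i k s \<in> Wset B E U D s)"
    and "\<forall>k\<in>{1..N}. \<forall>i\<in>{1..nk k}. \<forall>s\<in>{0..T}.
            ((\<lambda>r. A r *v \<xi>s i k r + \<omega> i k r) has_integral (xbar i k - \<xi>s i k s)) {s..T}"
    and "t \<in> {0..T}"
  shows "value_fun A B E U D g T t x \<le>
     Min ((\<lambda>k. Lg * (INF \<xi>\<in>convex hull ((\<lambda>i. \<xi>s i k t) ` {1..nk k}).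
                        norm (state_trans A T T t *v (x - \<xi>)))
              + \<gamma> k) ` {1..N})"
proof -
  \<comment> \<open>Not needed: T > 0, convexity of D, continuity of g, W(s) \<noteq> {}, \<gamma> k \<in> range g, and
    measurability of \<omega> (the integral equations for the \<xi>s already carry the integrability).\<close>
  interpret linear_game A B E U D T
    using assms(2-5,7,8,10) by unfold_locales
  have "value_fun A B E U D g T t x \<le>
          Lg * (INF \<xi>\<in>convex hull ((\<lambda>i. \<xi>s i k t) ` {1..nk k}).
                  norm (state_trans A T T t *v (x - \<xi>))) + \<gamma> k"
    if k: "k \<in> {1..N}" for k
  proof (rule le_mult_INF_plus)
    show "convex hull ((\<lambda>i. \<xi>s i k t) ` {1..nk k}) \<noteq> {}"
      using assms(18) k by auto
    fix \<xi>0 assume \<xi>0: "\<xi>0 \<in> convex hull ((\<lambda>i. \<xi>s i k t) ` {1..nk k})"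
    show "value_fun A B E U D g T t x \<le> Lg * norm (state_trans A T T t *v (x - \<xi>0)) + \<gamma> k"
      by (rule value_fun_le_convex_reference[where \<xi>s="\<lambda>i. \<xi>s i k" and \<omega>="\<lambda>i. \<omega> i k"
            and xbar="\<lambda>i. xbar i k", OF assms(22,14,13,6,12) finite_atLeastAtMost _ _ _ \<xi>0])
        (use assms(19-21) k in auto)
  qed (rule assms(13))
  then show ?thesis
    using assms(16) by (subst Min_ge_iff) auto
qed

end
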